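(* Let $\Gamma$ be a compact and connected metric graph. (i) A vector bundle $E$ of rank $n$ on $\Gamma$ is isomorphic to $E(\lambda)$ for some $S_n\ltimes\mathbb{R}^n$-local system $\lambda$ if and only if $E$ is semistable and of degree zero. Moreover, $E(\lambda)$ is stable if and only if the representation $\pi_1(\Gamma)\to S_n$ associated to $\lambda$ is indecomposable. (ii) Two $S_n\ltimes\mathbb{R}^n$-local systems $\lambda_1,\lambda_2$ give rise to isomorphic vector bundles $E(\lambda_1)\simeq E(\lambda_2)$ if and only if they define the same cover $f:\widetilde\Gamma\to\Gamma$ and the classes of the induced $\mathbb{R}$-local systems $\widetilde\lambda_1,\widetilde\lambda_2$ in $\mathrm{Jac}(\widetilde\Gamma)$ are equal.
   Context: Metric graphs, piecewise linear functions with integer slopes, divisors, $\mathrm{div}$, and the sheaf $\mathcal{H}_\Gamma$ of harmonic functions (piecewise linear functions $f$ with $\mathrm{div}(f)=0$, i.e. affine with integer slope along edges and with outgoing slopes summing to zero at every point) are as usual in tropical geometry. A vector bundle of rank $n$ on $\Gamma$ is a torsor under the sheaf of groups $S_n\ltimes\mathcal{H}_\Gamma^n$; with respect to an oriented simple model and its star cover it is given by transition data $(\sigma^e,g^e_1,\dots,g^e_n)$ on edges $e$ ($\sigma^e\in S_n$, $g^e_i$ affine with integer slope), viewed as a matrix over $\mathbb{T}=\mathbb{R}\cup\{\infty\}$ with finite entries $g^e_{i\sigma^e(i)}=g^e_i$. Its degree is the sum over edges of the slopes of all finite entries; its slope is $\mu(E)=\deg E/\mathrm{rk}\,E$. A rank-$m$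 bundle $F$ is a subbundle of $E$ if transition data can be chosen so that each transition matrix of $E$ has the block form $\begin{bmatrix} h^e & \ast\\ \infty & \ast\end{bmatrix}$ with $h^e$ the transition matrix of $F$. $E$ is semistable if $\mu(F)\le\mu(E)$ for all subbundles $F$, stable if the inequality is strict for proper nonzero subbundles. The constant functions give a subsheaf $\mathbb{R}\subset\mathcal{H}_\Gamma$ and hence a subsheaf $S_n\ltimes\mathbb{R}^n\subset S_n\ltimes\mathcal{H}^n_\Gamma$. An $S_n\ltimes\mathbb{R}^n$-local system $\lambda$ is a torsor under this locally constant sheaf; $E(\lambda)$ is the vector bundle obtained by extension of structure sheaf (a vector bundle with constant transition functions). The $S_n$-part of $\lambda$ gives a representation $\pi_1(\Gamma)\to S_n$ (up to conjugacy) and thus a free cover $f:\widetilde\Gamma\to\Gamma$ of degree $n$ (isometric covering map, $\widetilde\Gamma$ possibly disconnected), and there is an $\mathbb{R}$-local system $\widetilde\lambda$ on $\widetilde\Gamma$ with $f_\ast\widetilde\lambda=\lambda$; both are unique up to isomorphism. The representation is called indecomposable if it is transitive on $\{1,\dots,n\}$. The sheaf $\Omega_{\widetilde\Gamma}$ of harmonic $1$-forms is defined by the exact sequence $0\to\mathbb{R}\to\mathcal{H}_{\widetilde\Gamma}\to\Omega_{\widetilde\Gamma}\to0$, and $\mathrm{Jac}(\widetilde\Gamma)=H^1(\widetilde\Gamma,\mathbb{R})/\Omega_{\widetilde\Gamma}(\widetilde\Gamma)$, the quotient by the image of the connecting homomorphism; the class of $\widetilde\lambda$ is the image of its class in $H^1(\widetilde\Gamma,\mathbb{R})$.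 *)

theory Defs
  imports Complex_Main "HOL-Combinatorics.Permutations"
begin

text \<open>A point of edge e is described by its parameter t in the open interval (0, len e),
the distance from the source.\<close>

record ('v, 'e) mgraph =
  mg_verts :: "'v set"
  mg_edges :: "'e set"
  mg_src   :: "'e \<Rightarrow> 'v"
  mg_tgt   :: "'e \<Rightarrow> 'v"
  mg_len   :: "'e \<Rightarrow> real"

definition simple_model :: "('v,'e) mgraph \<Rightarrow> bool" where
  "simple_model G \<longleftrightarrow> finite (mg_verts G) \<and> mg_verts G \<noteq> {} \<and> finite (mg_edges G) \<and>
     (\<forall>e\<in>mg_edges G. mg_src G e \<in> mg_verts G \<and> mg_tgt G e \<in> mg_verts G \<and>
        mg_src G e \<noteq> mg_tgt G e \<and> mg_len G e > 0) \<and>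
     (\<forall>e\<in>mg_edges G. \<forall>e'\<in>mg_edges G.
        {mg_src G e, mg_tgt G e} = {mg_src G e', mg_tgt G e'} \<longrightarrow> e = e')"

text \<open>Walks: lists of (edge, direction); True = traversed from source to target.\<close>

fun is_walk :: "('v,'e) mgraph \<Rightarrow> 'v \<Rightarrow> ('e \<times> bool) list \<Rightarrow> 'v \<Rightarrow> bool" where
  "is_walk G v [] u \<longleftrightarrow> v = u"
| "is_walk G v ((e, True) # w) u \<longleftrightarrow>
     e \<in> mg_edges G \<and> mg_src G e = v \<and> is_walk G (mg_tgt G e) w u"
| "is_walk G v ((e, False) # w) u \<longleftrightarrow>
     e \<in> mg_edges G \<and> mg_tgt G e = v \<and> is_walk G (mg_src G e) w u"

definition connected_mgraph :: "('v,'e) mgraph \<Rightarrow> bool" where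
  "connected_mgraph G \<longleftrightarrow> (\<forall>u\<in>mg_verts G. \<forall>v\<in>mg_verts G. \<exists>w. is_walk G u w v)"

definition compact_connected_metric_graph :: "('v,'e) mgraph \<Rightarrow> bool" where
  "compact_connected_metric_graph G \<longleftrightarrow> simple_model G \<and> connected_mgraph G"

text \<open>An element evaluated at a point: a permutation sigma of {..<n} and values g_i;
as a tropical matrix its finite entries are at (i, sigma i) with value g i.
Tropical matrix product: (sigma,g)(tau,h) = (tau o sigma, i \<mapsto> g i + h (sigma i)).\<close>

definition gmult :: "(nat \<Rightarrow> nat) \<times> (nat \<Rightarrow> real) \<Rightarrow> (nat \<Rightarrow> nat) \<times> (nat \<Rightarrow> real)
     \<Rightarrow> (nat \<Rightarrow> nat) \<times> (nat \<Rightarrow> real)" where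
  "gmult x y = (fst y \<circ> fst x, \<lambda>i. snd x i + snd y (fst x i))"

definition geq :: "nat \<Rightarrow> (nat \<Rightarrow> nat) \<times> (nat \<Rightarrow> real) \<Rightarrow> (nat \<Rightarrow> nat) \<times> (nat \<Rightarrow> real) \<Rightarrow> bool" where
  "geq n x y \<longleftrightarrow> (\<forall>i<n. fst x i = fst y i \<and> snd x i = snd y i)"

text \<open>Transition data on an edge: permutation sigma^e and affine functions
g^e_i(t) = a_i + s_i * t with integer slopes s_i (slope along the orientation).\<close>

type_synonym 'e tdata = "'e \<Rightarrow> (nat \<Rightarrow> nat) \<times> (nat \<Rightarrow> real) \<times> (nat \<Rightarrow> int)"

definition tr_at :: "(nat \<Rightarrow> nat) \<times> (nat \<Rightarrow> real) \<times> (nat \<Rightarrow> int) \<Rightarrow> real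
     \<Rightarrow> (nat \<Rightarrow> nat) \<times> (nat \<Rightarrow> real)" where
  "tr_at x t = (fst x, \<lambda>i. fst (snd x) i + real_of_int (snd (snd x) i) * t)"

definition vbundle :: "('v,'e) mgraph \<Rightarrow> nat \<Rightarrow> 'e tdata \<Rightarrow> bool" where
  "vbundle G n D \<longleftrightarrow> (\<forall>e\<in>mg_edges G. fst (D e) permutes {..<n})"

text \<open>A section of S_n \<ltimes> H^n over the open star of v: a permutation tau, values b_i at v,
and integer outgoing slopes r i e on the incident edges, summing to zero at v
(harmonicity).\<close>

type_synonym 'e ssec = "(nat \<Rightarrow> nat) \<times> (nat \<Rightarrow> real) \<times> (nat \<Rightarrow> 'e \<Rightarrow> int)"

definition star_sec :: "('v,'e) mgraph \<Rightarrow> nat \<Rightarrow> 'v \<Rightarrow> 'e ssec \<Rightarrow> bool" where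
  "star_sec G n v s \<longleftrightarrow> fst s permutes {..<n} \<and>
     (\<forall>i<n. (\<Sum>e\<in>{e\<in>mg_edges G. mg_src G e = v \<or> mg_tgt G e = v}. snd (snd s) i e) = 0)"

definition sec_at :: "('v,'e) mgraph \<Rightarrow> 'v \<Rightarrow> 'e ssec \<Rightarrow> 'e \<Rightarrow> real
     \<Rightarrow> (nat \<Rightarrow> nat) \<times> (nat \<Rightarrow> real)" where
  "sec_at G v s e t = (fst s, \<lambda>i. fst (snd s) i + real_of_int (snd (snd s) i e) *
        (if v = mg_src G e then t else mg_len G e - t))"

text \<open>Isomorphism of rank n bundles given by transition data on the same model:
there are sections phi_v over the stars with phi_u A'^e = A^e phi_v on each edge e = (u \<rightarrow> v).\<close>

definition bundle_iso :: "('v,'e) mgraph \<Rightarrow> nat \<Rightarrow> 'e tdata \<Rightarrow> 'e tdata \<Rightarrow> bool" where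
  "bundle_iso G n D D' \<longleftrightarrow> vbundle G n D \<and> vbundle G n D' \<and>
     (\<exists>\<phi> :: 'v \<Rightarrow> 'e ssec. (\<forall>v\<in>mg_verts G. star_sec G n v (\<phi> v)) \<and>
        (\<forall>e\<in>mg_edges G. \<forall>t. 0 < t \<and> t < mg_len G e \<longrightarrow>
           geq n (gmult (sec_at G (mg_src G e) (\<phi> (mg_src G e)) e t) (tr_at (D' e) t))
                 (gmult (tr_at (D e) t) (sec_at G (mg_tgt G e) (\<phi> (mg_tgt G e)) e t))))"

definition degree :: "('v,'e) mgraph \<Rightarrow> nat \<Rightarrow> 'e tdata \<Rightarrow> int" where
  "degree G n D = (\<Sum>e\<in>mg_edges G. \<Sum>i<n. snd (snd (D e)) i)"

definition slope :: "('v,'e) mgraph \<Rightarrow> nat \<Rightarrow> 'e tdata \<Rightarrow> real" where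
  "slope G n D = real_of_int (degree G n D) / real n"

definition restrict_td :: "nat \<Rightarrow> 'e tdata \<Rightarrow> 'e tdata" where
  "restrict_td m D = (\<lambda>e. ((\<lambda>i. if i < m then fst (D e) i else i), fst (snd (D e)), snd (snd (D e))))"

text \<open>F (rank m) is a subbundle of E (rank n): transition data of E can be chosen so that
every transition matrix has block form [h^e, *; \<infinity>, *] (rows i \<ge> m have their finite
entry in a column \<ge> m) with h^e transition data of (a bundle isomorphic to) F.\<close>
definition subbundle :: "('v,'e) mgraph \<Rightarrow> nat \<Rightarrow> 'e tdata \<Rightarrow> nat \<Rightarrow> 'e tdata \<Rightarrow> bool" where
  "subbundle G m F n D \<longleftrightarrow> m \<le> n \<and> vbundle G m F \<and>
     (\<exists>D'. bundle_iso G n D D' \<and>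
        (\<forall>e\<in>mg_edges G. \<forall>i<n. m \<le> i \<longrightarrow> m \<le> fst (D' e) i) \<and>
        bundle_iso G m F (restrict_td m D'))"

definition semistable :: "('v,'e) mgraph \<Rightarrow> nat \<Rightarrow> 'e tdata \<Rightarrow> bool" where
  "semistable G n D \<longleftrightarrow> vbundle G n D \<and>
     (\<forall>m F. 0 < m \<longrightarrow> subbundle G m F n D \<longrightarrow> slope G m F \<le> slope G n D)"

definition stable :: "('v,'e) mgraph \<Rightarrow> nat \<Rightarrow> 'e tdata \<Rightarrow> bool" where
  "stable G n D \<longleftrightarrow> vbundle G n D \<and>
     (\<forall>m F. 0 < m \<longrightarrow> m < n \<longrightarrow> subbundle G m F n D \<longrightarrow> slope G m F < slope G n D)"

type_synonym 'e lsys = "'e \<Rightarrow> (nat \<Rightarrow> nat) \<times> (nat \<Rightarrow> real)"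

definition local_system :: "('v,'e) mgraph \<Rightarrow> nat \<Rightarrow> 'e lsys \<Rightarrow> bool" where
  "local_system G n L \<longleftrightarrow> (\<forall>e\<in>mg_edges G. fst (L e) permutes {..<n})"

definition E_of :: "'e lsys \<Rightarrow> 'e tdata" where
  "E_of L = (\<lambda>e. (fst (L e), snd (L e), \<lambda>_. 0))"

text \<open>Monodromy (path lifting in the cover) of a walk acting on sheet indices.\<close>
fun transport :: "('e \<Rightarrow> nat \<Rightarrow> nat) \<Rightarrow> ('e \<times> bool) list \<Rightarrow> nat \<Rightarrow> nat" where
  "transport \<sigma> [] i = i"
| "transport \<sigma> ((e, True) # w) i = transport \<sigma> w (\<sigma> e i)"
| "transport \<sigma> ((e, False) # w) i = transport \<sigma> w (inv (\<sigma> e) i)"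

text \<open>The representation pi_1(Gamma, v0) \<rightarrow> S_n is transitive on {..<n}.\<close>
definition indecomposable :: "('v,'e) mgraph \<Rightarrow> nat \<Rightarrow> 'e lsys \<Rightarrow> bool" where
  "indecomposable G n L \<longleftrightarrow> (\<forall>v0\<in>mg_verts G. \<forall>i<n. \<forall>j<n.
     \<exists>w. is_walk G v0 w v0 \<and> transport (\<lambda>e. fst (L e)) w i = j)"

text \<open>The cover of lambda has vertices (v,i), i<n, and edges (e,i) from (src e, i) to
(tgt e, sigma^e i) of length len e; the R-local system tilde-lambda has transition
constant snd (lambda e) i on the edge (e,i).
An isomorphism of covers over Gamma from the cover of lambda1 to that of lambda2 is
given by permutations pi_v of the fibres over the vertices compatible with edges.\<close>
definition cover_iso :: "('v,'e) mgraph \<Rightarrow> nat \<Rightarrow> 'e lsys \<Rightarrow> 'e lsys \<Rightarrow> ('v \<Rightarrow> nat \<Rightarrow> nat) \<Rightarrow> bool" where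
  "cover_iso G n L1 L2 \<pi> \<longleftrightarrow> (\<forall>v\<in>mg_verts G. \<pi> v permutes {..<n}) \<and>
     (\<forall>e\<in>mg_edges G. \<forall>i<n. \<pi> (mg_tgt G e) (fst (L1 e) i) = fst (L2 e) (\<pi> (mg_src G e) i))"

text \<open>Equality of classes in Jac(cover of lambda1) = H^1(R)/Omega, where tilde-lambda2 is
transported along the cover isomorphism pi. H^1 is computed on the star cover: edge
cochains modulo coboundaries a(tgt) - a(src); the image of the global harmonic 1-forms
(integer flows omega, Kirchhoff condition at every vertex of the cover) under the
connecting homomorphism is the set of cochains len * omega.\<close>
definition same_jac_class :: "('v,'e) mgraph \<Rightarrow> nat \<Rightarrow> 'e lsys \<Rightarrow> 'e lsys \<Rightarrow> ('v \<Rightarrow> nat \<Rightarrow> nat) \<Rightarrow> bool" where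
  "same_jac_class G n L1 L2 \<pi> \<longleftrightarrow>
     (\<exists>(a :: 'v \<Rightarrow> nat \<Rightarrow> real) (\<omega> :: 'e \<Rightarrow> nat \<Rightarrow> int).
        (\<forall>v\<in>mg_verts G. \<forall>j<n.
           (\<Sum>e\<in>{e\<in>mg_edges G. mg_src G e = v}. \<omega> e j)
           = (\<Sum>p\<in>{(e,i). e \<in> mg_edges G \<and> i < n \<and> mg_tgt G e = v \<and> fst (L1 e) i = j}.
                 \<omega> (fst p) (snd p))) \<and>
        (\<forall>e\<in>mg_edges G. \<forall>i<n.
           snd (L1 e) i - snd (L2 e) (\<pi> (mg_src G e) i)
           = a (mg_tgt G e) (fst (L1 e) i) - a (mg_src G e) i
             + mg_len G e * real_of_int (\<omega> e i)))"

end

theory Submission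
  imports Defs
begin

text \<open>Transition functions are affine on every edge, so an isomorphism of bundles is a family of
  harmonic sections over the stars whose permutations, slopes and values must match edge by edge.
  Up to isomorphism, the subbundles of \<open>E\<close> are given by the invariant families of sheets of the
  cover, i.e. unions of its connected components, and their degree is the total slope on these
  sheets; harmonicity makes this an isomorphism invariant, which vanishes for \<open>E(\<lambda>)\<close>. Hence
  \<open>E(\<lambda>)\<close> is semistable of degree zero, and it is stable iff the cover is connected, since the
  component through a sheet gives a destabilising subbundle otherwise.

  Conversely, if \<open>E\<close> is semistable of degree zero then every invariant family of sheets has
  degree zero, so on each component of the cover the divergence equation for an integer flow can
  be solved along walks from a base point. Splitting every slope along this flow between the two
  endpoints of its edge gives harmonic sections that remove all slopes: \<open>E \<cong> E(\<lambda>)\<close>.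

  Finally, an isomorphism \<open>E(\<lambda>\<^sub>1) \<cong> E(\<lambda>\<^sub>2)\<close> is the same as an isomorphism of the covers
  (the permutations), a divergence-free integer flow on the cover, i.e. a harmonic 1-form (the
  slopes), and vertex values whose coboundary absorbs the remaining difference of the constants:
  equality of the classes in the Jacobian.\<close>

abbreviation perm_of :: "(nat \<Rightarrow> nat) \<times> 'a \<Rightarrow> nat \<Rightarrow> nat" where
  "perm_of x \<equiv> fst x"

abbreviation offset_of :: "'a \<times> (nat \<Rightarrow> real) \<times> 'b \<Rightarrow> nat \<Rightarrow> real" where
  "offset_of x \<equiv> fst (snd x)"

abbreviation slopes_of :: "'a \<times> 'b \<times> 'c \<Rightarrow> 'c" where
  "slopes_of x \<equiv> snd (snd x)"

abbreviation out_edges :: "('v,'e) mgraph \<Rightarrow> 'v \<Rightarrow> 'e set" where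
  "out_edges G v \<equiv> {e\<in>mg_edges G. mg_src G e = v}"

abbreviation in_edges :: "('v,'e) mgraph \<Rightarrow> 'v \<Rightarrow> 'e set" where
  "in_edges G v \<equiv> {e\<in>mg_edges G. mg_tgt G e = v}"

abbreviation star_edges :: "('v,'e) mgraph \<Rightarrow> 'v \<Rightarrow> 'e set" where
  "star_edges G v \<equiv> {e\<in>mg_edges G. mg_src G e = v \<or> mg_tgt G e = v}"

lemma simple_modelD:
  assumes "simple_model G"
  shows "finite (mg_verts G)" "finite (mg_edges G)"
    "\<And>e. e \<in> mg_edges G \<Longrightarrow> mg_src G e \<in> mg_verts G"
    "\<And>e. e \<in> mg_edges G \<Longrightarrow> mg_tgt G e \<in> mg_verts G"
    "\<And>e. e \<in> mg_edges G \<Longrightarrow> mg_src G e \<noteq> mg_tgt G e"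
    "\<And>e. e \<in> mg_edges G \<Longrightarrow> mg_len G e > 0"
  using assms unfolding simple_model_def by auto

lemma sum_star_edges:
  assumes "simple_model G"
  shows "(\<Sum>e\<in>star_edges G v. g e) = (\<Sum>e\<in>out_edges G v. g e) + (\<Sum>e\<in>in_edges G v. g e)"
proof -
  have "star_edges G v = out_edges G v \<union> in_edges G v" by auto
  moreover have "out_edges G v \<inter> in_edges G v = {}"
    using simple_modelD(5)[OF assms] by fastforce
  ultimately show ?thesis
    using simple_modelD(2)[OF assms] by (simp add: sum.union_disjoint)
qed

lemma permutes_less:
  assumes "\<sigma> permutes {..<n}" and "i < n"
  shows "\<sigma> i < n" "inv \<sigma> i < n"
  using permutes_in_image[OF assms(1)] permutes_in_image[OF permutes_inv[OF assms(1)]] assms(2)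
  by auto

section \<open>Bundle isomorphisms in terms of edge data\<close>

lemma affine_eq_on_interval_iff:
  fixes a b c d l :: real
  assumes "0 < l"
  shows "(\<forall>t. 0 < t \<and> t < l \<longrightarrow> a + b * t = c + d * t) \<longleftrightarrow> a = c \<and> b = d"
proof
  assume eq: "\<forall>t. 0 < t \<and> t < l \<longrightarrow> a + b * t = c + d * t"
  have "a + b * (l/2) = c + d * (l/2)" "a + b * (l/4) = c + d * (l/4)"
    using eq[rule_format, of "l/2"] eq[rule_format, of "l/4"] assms by simp_all
  then have "b * l = d * l" by linarith
  then have "b = d" using assms by simp
  with \<open>a + b * (l/2) = c + d * (l/2)\<close> show "a = c \<and> b = d" by simp
qed auto

lemma affine_transition_eq_iff:
  fixes a a' b b' l :: real and r r' s s' :: int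
  assumes "0 < l"
  shows "(\<forall>t. 0 < t \<and> t < l \<longrightarrow>
            a + of_int r * t + (a' + of_int r' * t) = b + of_int s * t + (b' + of_int s' * (l - t)))
     \<longleftrightarrow> r + r' = s - s' \<and> a + a' = b + b' + of_int s' * l"
proof -
  have "a + of_int r * t + (a' + of_int r' * t) = b + of_int s * t + (b' + of_int s' * (l - t))
    \<longleftrightarrow> (a + a') + of_int (r + r') * t = (b + b' + of_int s' * l) + of_int (s - s') * t" for t
    by (simp add: algebra_simps)
  moreover have "of_int (r + r') = (of_int (s - s') :: real) \<longleftrightarrow> r + r' = s - s'"
    by (rule of_int_eq_iff)
  ultimately show ?thesis
    using affine_eq_on_interval_iff[OF assms, of "a + a'" "of_int (r + r')" _ "of_int (s - s')"]
    by (simp only:) blast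
qed

lemma edge_compatible_iff:
  assumes "0 < mg_len G e" and "mg_src G e \<noteq> mg_tgt G e"
  shows "(\<forall>t. 0 < t \<and> t < mg_len G e \<longrightarrow>
           geq n (gmult (sec_at G (mg_src G e) s e t) (tr_at d' t))
                 (gmult (tr_at d t) (sec_at G (mg_tgt G e) s' e t)))
   \<longleftrightarrow> (\<forall>i<n. perm_of d' (perm_of s i) = perm_of s' (perm_of d i) \<and>
        slopes_of s i e + slopes_of d' (perm_of s i)
          = slopes_of d i - slopes_of s' (perm_of d i) e \<and>
        offset_of s i + offset_of d' (perm_of s i)
          = offset_of d i + offset_of s' (perm_of d i)
            + real_of_int (slopes_of s' (perm_of d i) e) * mg_len G e)"
  (is "?L \<longleftrightarrow> ?R")
proof -
  obtain t0 where "0 < t0 \<and> t0 < mg_len G e"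
    using assms(1) by (intro that[of "mg_len G e / 2"]) simp
  then have "?L \<longleftrightarrow> (\<forall>i<n. perm_of d' (perm_of s i) = perm_of s' (perm_of d i) \<and>
      (\<forall>t. 0 < t \<and> t < mg_len G e \<longrightarrow>
        offset_of s i + of_int (slopes_of s i e) * t
          + (offset_of d' (perm_of s i) + of_int (slopes_of d' (perm_of s i)) * t)
        = offset_of d i + of_int (slopes_of d i) * t
          + (offset_of s' (perm_of d i)
             + of_int (slopes_of s' (perm_of d i) e) * (mg_len G e - t))))"
    unfolding geq_def gmult_def tr_at_def sec_at_def using assms(2) by auto
  also have "\<dots> \<longleftrightarrow> ?R"
    by (simp only: affine_transition_eq_iff[OF assms(1)])
  finally show ?thesis .
qed

definition iso_witness :: "('v,'e) mgraph \<Rightarrow> nat \<Rightarrow> 'e tdata \<Rightarrow> 'e tdata \<Rightarrow> ('v \<Rightarrow> 'e ssec) \<Rightarrow> bool"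
  where "iso_witness G n D D' \<phi> \<longleftrightarrow> (\<forall>v\<in>mg_verts G. star_sec G n v (\<phi> v)) \<and>
   (\<forall>e\<in>mg_edges G. \<forall>i<n.
      perm_of (D' e) (perm_of (\<phi> (mg_src G e)) i) = perm_of (\<phi> (mg_tgt G e)) (perm_of (D e) i) \<and>
      slopes_of (\<phi> (mg_src G e)) i e + slopes_of (D' e) (perm_of (\<phi> (mg_src G e)) i)
        = slopes_of (D e) i - slopes_of (\<phi> (mg_tgt G e)) (perm_of (D e) i) e \<and>
      offset_of (\<phi> (mg_src G e)) i + offset_of (D' e) (perm_of (\<phi> (mg_src G e)) i)
        = offset_of (D e) i + offset_of (\<phi> (mg_tgt G e)) (perm_of (D e) i)
          + real_of_int (slopes_of (\<phi> (mg_tgt G e)) (perm_of (D e) i) e) * mg_len G e)"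

lemma bundle_iso_iff_witness:
  assumes "simple_model G"
  shows "bundle_iso G n D D' \<longleftrightarrow> vbundle G n D \<and> vbundle G n D' \<and> (\<exists>\<phi>. iso_witness G n D D' \<phi>)"
proof -
  note edge = edge_compatible_iff[OF simple_modelD(6,5)[OF assms]]
  show ?thesis
    unfolding bundle_iso_def iso_witness_def by (simp add: edge)
qed

lemma bundle_iso_refl:
  assumes "simple_model G" and "vbundle G n D"
  shows "bundle_iso G n D D"
proof -
  have "iso_witness G n D D (\<lambda>_. (id, \<lambda>_. 0, \<lambda>_ _. 0))"
    unfolding iso_witness_def star_sec_def by simp
  with assms show ?thesis by (auto simp: bundle_iso_iff_witness)
qed

section \<open>Degrees of invariant families of sheets\<close>

text \<open>Invariant families of sheets are the unions of connected components of the cover defined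
  by the permutations \<open>\<sigma> e\<close>.\<close>

definition invariant_sheets :: "('v,'e) mgraph \<Rightarrow> nat \<Rightarrow> ('e \<Rightarrow> nat \<Rightarrow> nat) \<Rightarrow> ('v \<Rightarrow> nat set) \<Rightarrow> bool"
  where "invariant_sheets G n \<sigma> K \<longleftrightarrow> (\<forall>v\<in>mg_verts G. K v \<subseteq> {..<n}) \<and>
     (\<forall>e\<in>mg_edges G. \<forall>i<n. i \<in> K (mg_src G e) \<longleftrightarrow> \<sigma> e i \<in> K (mg_tgt G e))"

definition sheet_degree :: "('v,'e) mgraph \<Rightarrow> 'e tdata \<Rightarrow> ('v \<Rightarrow> nat set) \<Rightarrow> int" where
  "sheet_degree G D K = (\<Sum>e\<in>mg_edges G. \<Sum>i\<in>K (mg_src G e). slopes_of (D e) i)"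

lemma invariant_sheets_bij_betw:
  assumes G: "simple_model G" and K: "invariant_sheets G n \<sigma> K"
    and e: "e \<in> mg_edges G" and \<sigma>: "\<sigma> e permutes {..<n}"
  shows "bij_betw (\<sigma> e) (K (mg_src G e)) (K (mg_tgt G e))"
proof -
  have sub: "K (mg_src G e) \<subseteq> {..<n}" "K (mg_tgt G e) \<subseteq> {..<n}"
    using K e simple_modelD(3,4)[OF G] unfolding invariant_sheets_def by auto
  have "\<sigma> e ` K (mg_src G e) = K (mg_tgt G e)"
  proof (intro equalityI subsetI)
    fix j assume "j \<in> \<sigma> e ` K (mg_src G e)"
    then show "j \<in> K (mg_tgt G e)" using K e sub unfolding invariant_sheets_def by auto
  next
    fix j assume j: "j \<in> K (mg_tgt G e)"
    have "inv (\<sigma> e) j \<in> K (mg_src G e)"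
      using K e j sub permutes_less[OF \<sigma>] permutes_inverses(1)[OF \<sigma>]
      unfolding invariant_sheets_def by (metis lessThan_iff subsetD)
    then show "j \<in> \<sigma> e ` K (mg_src G e)"
      using permutes_inverses(1)[OF \<sigma>] by (metis image_eqI)
  qed
  then show ?thesis using permutes_inj_on[OF \<sigma>] by (simp add: bij_betw_def)
qed

lemma sum_edges_endpoints:
  assumes G: "simple_model G"
  shows "(\<Sum>e\<in>mg_edges G. f (mg_src G e) e + f (mg_tgt G e) e)
       = (\<Sum>v\<in>mg_verts G. \<Sum>e\<in>star_edges G v. f v e)"
proof -
  note finite = simple_modelD(1,2)[OF G] and ends = simple_modelD(3,4)[OF G]
  have "(\<Sum>v\<in>mg_verts G. \<Sum>e\<in>out_edges G v. f v e) = (\<Sum>e\<in>mg_edges G. f (mg_src G e) e)"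
    using sum.group[OF finite(2,1), of "mg_src G" "\<lambda>e. f (mg_src G e) e"] ends
    by (auto intro!: sum.cong)
  moreover
  have "(\<Sum>v\<in>mg_verts G. \<Sum>e\<in>in_edges G v. f v e) = (\<Sum>e\<in>mg_edges G. f (mg_tgt G e) e)"
    using sum.group[OF finite(2,1), of "mg_tgt G" "\<lambda>e. f (mg_tgt G e) e"] ends
    by (auto intro!: sum.cong)
  ultimately show ?thesis
    by (simp add: sum_star_edges[OF G] sum.distrib)
qed

text \<open>By harmonicity, the outgoing slopes of each section cancel at its vertex.\<close>

lemma sum_star_sec_slopes_eq_0:
  assumes G: "simple_model G" and \<phi>: "\<forall>v\<in>mg_verts G. star_sec G n v (\<phi> v)"
    and K: "\<forall>v\<in>mg_verts G. K v \<subseteq> {..<n}"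
  shows "(\<Sum>e\<in>mg_edges G. (\<Sum>i\<in>K (mg_src G e). slopes_of (\<phi> (mg_src G e)) i e)
            + (\<Sum>i\<in>K (mg_tgt G e). slopes_of (\<phi> (mg_tgt G e)) i e)) = 0"
proof -
  have "(\<Sum>i\<in>K v. \<Sum>e\<in>star_edges G v. slopes_of (\<phi> v) i e) = 0" if "v \<in> mg_verts G" for v
    using \<phi> K that unfolding star_sec_def by (intro sum.neutral) auto
  then show ?thesis
    by (simp add: sum_edges_endpoints[OF G, of "\<lambda>v e. \<Sum>i\<in>K v. slopes_of (\<phi> v) i e"]
        sum.swap[of _ "K _"])
qed

lemma sheet_degree_iso_witness:
  assumes G: "simple_model G" and \<phi>: "iso_witness G n D D' \<phi>" and D: "vbundle G n D"
    and K: "invariant_sheets G n (\<lambda>e. perm_of (D e)) K"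
  shows "sheet_degree G D K = sheet_degree G D' (\<lambda>v. perm_of (\<phi> v) ` K v)"
proof -
  have star: "\<forall>v\<in>mg_verts G. star_sec G n v (\<phi> v)" using \<phi> unfolding iso_witness_def by blast
  have KV: "\<forall>v\<in>mg_verts G. K v \<subseteq> {..<n}" using K unfolding invariant_sheets_def by blast
  have edge: "(\<Sum>i\<in>K (mg_src G e). slopes_of (D e) i)
     = (\<Sum>k\<in>perm_of (\<phi> (mg_src G e)) ` K (mg_src G e). slopes_of (D' e) k)
       + ((\<Sum>i\<in>K (mg_src G e). slopes_of (\<phi> (mg_src G e)) i e)
          + (\<Sum>j\<in>K (mg_tgt G e). slopes_of (\<phi> (mg_tgt G e)) j e))"
    if e: "e \<in> mg_edges G" for e
  proof -
    let ?u = "mg_src G e" and ?v = "mg_tgt G e"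
    have \<sigma>: "perm_of (D e) permutes {..<n}" using D e unfolding vbundle_def by blast
    have \<tau>: "perm_of (\<phi> ?u) permutes {..<n}"
      using star simple_modelD(3)[OF G e] unfolding star_sec_def by blast
    have "slopes_of (D e) i = slopes_of (D' e) (perm_of (\<phi> ?u) i)
       + slopes_of (\<phi> ?u) i e + slopes_of (\<phi> ?v) (perm_of (D e) i) e" if "i \<in> K ?u" for i
      using \<phi> e that KV simple_modelD(3)[OF G e] unfolding iso_witness_def by fastforce
    then have "(\<Sum>i\<in>K ?u. slopes_of (D e) i) = (\<Sum>i\<in>K ?u. slopes_of (D' e) (perm_of (\<phi> ?u) i))
       + (\<Sum>i\<in>K ?u. slopes_of (\<phi> ?u) i e) + (\<Sum>i\<in>K ?u. slopes_of (\<phi> ?v) (perm_of (D e) i) e)"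
      by (simp add: sum.distrib)
    also have "(\<Sum>i\<in>K ?u. slopes_of (\<phi> ?v) (perm_of (D e) i) e) = (\<Sum>j\<in>K ?v. slopes_of (\<phi> ?v) j e)"
      by (rule sum.reindex_bij_betw[OF invariant_sheets_bij_betw[OF G K e \<sigma>]])
    also have "(\<Sum>i\<in>K ?u. slopes_of (D' e) (perm_of (\<phi> ?u) i))
       = (\<Sum>k\<in>perm_of (\<phi> ?u) ` K ?u. slopes_of (D' e) k)"
      by (simp add: sum.reindex[OF permutes_inj_on[OF \<tau>]])
    finally show ?thesis by simp
  qed
  show ?thesis
    unfolding sheet_degree_def
    using sum_star_sec_slopes_eq_0[OF G star KV] by (simp add: edge sum.distrib)
qed

lemma sheet_degree_cong:
  assumes "simple_model G" and "\<And>v. v \<in> mg_verts G \<Longrightarrow> K v = K' v"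
  shows "sheet_degree G D K = sheet_degree G D K'"
  unfolding sheet_degree_def using assms simple_modelD(3)[OF assms(1)] by (intro sum.cong) auto

lemma invariant_sheets_cong:
  assumes "simple_model G" and "\<And>v. v \<in> mg_verts G \<Longrightarrow> K v = K' v"
  shows "invariant_sheets G n \<sigma> K \<longleftrightarrow> invariant_sheets G n \<sigma> K'"
  unfolding invariant_sheets_def using assms simple_modelD(3,4)[OF assms(1)] by auto

lemma degree_eq_sheet_degree: "degree G n D = sheet_degree G D (\<lambda>_. {..<n})"
  unfolding degree_def sheet_degree_def ..

lemma sheet_degree_E_of: "sheet_degree G (E_of L) K = 0"
  unfolding sheet_degree_def E_of_def by simp

lemma invariant_sheets_lessThan:
  assumes "vbundle G n D"
  shows "invariant_sheets G n (\<lambda>e. perm_of (D e)) (\<lambda>_. {..<n})"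
  using assms permutes_less unfolding invariant_sheets_def vbundle_def by blast

lemma invariant_sheets_Diff:
  assumes "vbundle G n D" and "invariant_sheets G n (\<lambda>e. perm_of (D e)) K"
  shows "invariant_sheets G n (\<lambda>e. perm_of (D e)) (\<lambda>v. {..<n} - K v)"
  using assms permutes_less unfolding invariant_sheets_def vbundle_def by auto

lemma sheet_degree_add_Diff:
  assumes G: "simple_model G" and K: "invariant_sheets G n \<sigma> K"
  shows "sheet_degree G D K + sheet_degree G D (\<lambda>v. {..<n} - K v) = degree G n D"
  unfolding degree_def sheet_degree_def sum.distrib[symmetric]
proof (intro sum.cong refl)
  fix e assume "e \<in> mg_edges G"
  then have "K (mg_src G e) \<subseteq> {..<n}"
    using K simple_modelD(3)[OF G] unfolding invariant_sheets_def by blast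
  from sum.subset_diff[OF this finite_lessThan, of "slopes_of (D e)"]
  show "(\<Sum>i\<in>K (mg_src G e). slopes_of (D e) i) + (\<Sum>i\<in>{..<n} - K (mg_src G e). slopes_of (D e) i)
      = (\<Sum>i<n. slopes_of (D e) i)" by simp
qed

section \<open>Walks and the components of the cover\<close>

lemma is_walk_induct [consumes 1, case_names Nil Fwd Bwd]:
  assumes "is_walk G u w v"
    and nil: "\<And>u. P u [] u"
    and fwd: "\<And>e w v. e \<in> mg_edges G \<Longrightarrow> is_walk G (mg_tgt G e) w v \<Longrightarrow> P (mg_tgt G e) w v
      \<Longrightarrow> P (mg_src G e) ((e, True) # w) v"
    and bwd: "\<And>e w v. e \<in> mg_edges G \<Longrightarrow> is_walk G (mg_src G e) w v \<Longrightarrow> P (mg_src G e) w v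
      \<Longrightarrow> P (mg_tgt G e) ((e, False) # w) v"
  shows "P u w v"
  using assms(1)
proof (induction w arbitrary: u)
  case (Cons a w)
  then show ?case by (cases a; cases "snd a") (auto intro: fwd bwd)
qed (simp add: nil)

lemma is_walk_append: "is_walk G u w x \<Longrightarrow> is_walk G x w' v \<Longrightarrow> is_walk G u (w @ w') v"
  by (induction rule: is_walk_induct) auto

lemma is_walk_snoc:
  assumes "is_walk G u w v" and "e \<in> mg_edges G"
  shows "v = mg_src G e \<Longrightarrow> is_walk G u (w @ [(e, True)]) (mg_tgt G e)"
    and "v = mg_tgt G e \<Longrightarrow> is_walk G u (w @ [(e, False)]) (mg_src G e)"
  using is_walk_append[OF assms(1), of "[(e, True)]" "mg_tgt G e"]
    is_walk_append[OF assms(1), of "[(e, False)]" "mg_src G e"] assms(2) by simp_all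

lemma transport_append: "transport \<sigma> (w @ w') i = transport \<sigma> w' (transport \<sigma> w i)"
  by (induction \<sigma> w i rule: transport.induct) auto

lemma transport_less:
  assumes "\<forall>e\<in>mg_edges G. \<sigma> e permutes {..<n}"
  shows "is_walk G u w v \<Longrightarrow> i < n \<Longrightarrow> transport \<sigma> w i < n"
proof (induction arbitrary: i rule: is_walk_induct)
  case (Fwd e w v)
  then have "\<sigma> e permutes {..<n}" using assms by blast
  with Fwd show ?case using permutes_less(1)[of "\<sigma> e"] by simp
next
  case (Bwd e w v)
  then have "\<sigma> e permutes {..<n}" using assms by blast
  with Bwd show ?case using permutes_less(2)[of "\<sigma> e"] by simp
qed simp

lemma transport_in_invariant_sheets:
  assumes K: "invariant_sheets G n \<sigma> K" and perms: "\<forall>e\<in>mg_edges G. \<sigma> e permutes {..<n}"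
  shows "is_walk G u w v \<Longrightarrow> i < n \<Longrightarrow> i \<in> K u \<Longrightarrow> transport \<sigma> w i \<in> K v"
proof (induction arbitrary: i rule: is_walk_induct)
  case (Fwd e w v)
  then have "\<sigma> e permutes {..<n}" using perms by blast
  with Fwd K show ?case using permutes_less(1)[of "\<sigma> e"] unfolding invariant_sheets_def by simp
next
  case (Bwd e w v)
  then have \<sigma>: "\<sigma> e permutes {..<n}" using perms by blast
  with Bwd K have "inv (\<sigma> e) i \<in> K (mg_src G e)"
    using permutes_less(2)[OF \<sigma>] permutes_inverses(1)[OF \<sigma>] unfolding invariant_sheets_def by metis
  with Bwd.IH show ?case using permutes_less(2)[OF \<sigma>] Bwd.prems(1) by simp
qed simp

lemma card_invariant_sheets_walk:
  assumes G: "simple_model G" and K: "invariant_sheets G n \<sigma> K"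
    and perms: "\<forall>e\<in>mg_edges G. \<sigma> e permutes {..<n}"
  shows "is_walk G u w v \<Longrightarrow> card (K u) = card (K v)"
proof (induction rule: is_walk_induct)
  case (Fwd e w v)
  then show ?case using bij_betw_same_card[OF invariant_sheets_bij_betw[OF G K]] perms by simp
next
  case (Bwd e w v)
  then show ?case using bij_betw_same_card[OF invariant_sheets_bij_betw[OF G K]] perms by simp
qed simp

lemma card_invariant_sheets_eq:
  assumes G: "compact_connected_metric_graph G" and K: "invariant_sheets G n \<sigma> K"
    and perms: "\<forall>e\<in>mg_edges G. \<sigma> e permutes {..<n}"
    and "u \<in> mg_verts G" "v \<in> mg_verts G"
  shows "card (K u) = card (K v)"
proof -
  have "simple_model G" "connected_mgraph G"
    using G unfolding compact_connected_metric_graph_def by simp_all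
  then obtain w where "is_walk G u w v"
    using assms(4,5) unfolding connected_mgraph_def by blast
  then show ?thesis by (rule card_invariant_sheets_walk[OF \<open>simple_model G\<close> K perms])
qed

definition rev_walk :: "('e \<times> bool) list \<Rightarrow> ('e \<times> bool) list" where
  "rev_walk w = rev (map (\<lambda>(e, b). (e, \<not> b)) w)"

lemma rev_walk_simps [simp]:
  "rev_walk [] = []" "rev_walk ((e, b) # w) = rev_walk w @ [(e, \<not> b)]"
  unfolding rev_walk_def by simp_all

lemma is_walk_rev_walk: "is_walk G u w v \<Longrightarrow> is_walk G v (rev_walk w) u"
proof (induction rule: is_walk_induct)
  case (Fwd e w v)
  then show ?case using is_walk_snoc(2)[OF Fwd.IH] by simp
next
  case (Bwd e w v)
  then show ?case using is_walk_snoc(1)[OF Bwd.IH] by simp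
qed simp

lemma transport_rev_walk:
  assumes "\<forall>e\<in>mg_edges G. \<sigma> e permutes {..<n}"
  shows "is_walk G u w v \<Longrightarrow> transport \<sigma> (rev_walk w) (transport \<sigma> w i) = i"
proof (induction arbitrary: i rule: is_walk_induct)
  case (Fwd e w v)
  then have "\<sigma> e permutes {..<n}" using assms by blast
  with Fwd.IH show ?case by (simp add: transport_append permutes_inverses(2))
next
  case (Bwd e w v)
  then have "\<sigma> e permutes {..<n}" using assms by blast
  with Bwd.IH show ?case by (simp add: transport_append permutes_inverses(1))
qed simp

definition cover_component :: "('v,'e) mgraph \<Rightarrow> nat \<Rightarrow> ('e \<Rightarrow> nat \<Rightarrow> nat) \<Rightarrow> 'v \<Rightarrow> nat \<Rightarrow> 'v \<Rightarrow> nat set"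
  where "cover_component G n \<sigma> u i v = {k. k < n \<and> (\<exists>w. is_walk G u w v \<and> transport \<sigma> w i = k)}"

lemma start_in_cover_component: "i < n \<Longrightarrow> i \<in> cover_component G n \<sigma> u i u"
  unfolding cover_component_def by (auto intro: exI[of _ "[]"])

lemma invariant_sheets_cover_component:
  assumes perms: "\<forall>e\<in>mg_edges G. \<sigma> e permutes {..<n}"
  shows "invariant_sheets G n \<sigma> (cover_component G n \<sigma> u i)"
  unfolding invariant_sheets_def
proof (intro conjI ballI allI impI iffI)
  fix e k assume e: "e \<in> mg_edges G" and k: "k < n"
    and "k \<in> cover_component G n \<sigma> u i (mg_src G e)"
  then obtain w where "is_walk G u w (mg_src G e)" "transport \<sigma> w i = k"
    unfolding cover_component_def by blast
  then have "is_walk G u (w @ [(e, True)]) (mg_tgt G e)"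
    and "transport \<sigma> (w @ [(e, True)]) i = \<sigma> e k"
    using is_walk_snoc(1)[OF _ e refl] by (simp_all add: transport_append)
  then show "\<sigma> e k \<in> cover_component G n \<sigma> u i (mg_tgt G e)"
    using permutes_less[OF perms[rule_format, OF e] k] unfolding cover_component_def by blast
next
  fix e k assume e: "e \<in> mg_edges G" and k: "k < n"
    and "\<sigma> e k \<in> cover_component G n \<sigma> u i (mg_tgt G e)"
  then obtain w where "is_walk G u w (mg_tgt G e)" "transport \<sigma> w i = \<sigma> e k"
    unfolding cover_component_def by blast
  then have "is_walk G u (w @ [(e, False)]) (mg_src G e)"
    and "transport \<sigma> (w @ [(e, False)]) i = k"
    using is_walk_snoc(2)[OF _ e refl] permutes_inverses(2)[OF perms[rule_format, OF e]]
    by (simp_all add: transport_append)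
  then show "k \<in> cover_component G n \<sigma> u i (mg_src G e)"
    using k unfolding cover_component_def by blast
qed (auto simp: cover_component_def)

lemma cover_component_through_every_sheet:
  assumes G: "compact_connected_metric_graph G" and perms: "\<forall>e\<in>mg_edges G. \<sigma> e permutes {..<n}"
    and "u \<in> mg_verts G" "v \<in> mg_verts G" "j < n"
  shows "\<exists>i<n. j \<in> cover_component G n \<sigma> u i v"
proof -
  obtain w where w: "is_walk G v w u"
    using G assms(3,4) unfolding compact_connected_metric_graph_def connected_mgraph_def by blast
  show ?thesis
    using transport_less[OF perms w \<open>j < n\<close>] is_walk_rev_walk[OF w] transport_rev_walk[OF perms w]
      \<open>j < n\<close> unfolding cover_component_def by blast
qed

section \<open>Subbundles and invariant families of sheets\<close>

lemma invariant_sheets_pullback: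
  assumes G: "simple_model G" and \<phi>: "iso_witness G n D D' \<phi>" and D: "vbundle G n D"
    and K': "invariant_sheets G n (\<lambda>e. perm_of (D' e)) K'"
  shows "invariant_sheets G n (\<lambda>e. perm_of (D e)) (\<lambda>v. {i. i < n \<and> perm_of (\<phi> v) i \<in> K' v})"
  unfolding invariant_sheets_def
proof (intro conjI ballI allI impI)
  fix e i assume e: "e \<in> mg_edges G" and i: "i < n"
  let ?u = "mg_src G e" and ?v = "mg_tgt G e"
  have "perm_of (\<phi> ?u) permutes {..<n}"
    using \<phi> simple_modelD(3)[OF G e] unfolding iso_witness_def star_sec_def by blast
  then have "perm_of (\<phi> ?u) i \<in> K' ?u \<longleftrightarrow> perm_of (D' e) (perm_of (\<phi> ?u) i) \<in> K' ?v"
    using K' e i permutes_less unfolding invariant_sheets_def by blast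
  also have "perm_of (D' e) (perm_of (\<phi> ?u) i) = perm_of (\<phi> ?v) (perm_of (D e) i)"
    using \<phi> e i unfolding iso_witness_def by blast
  finally show "i \<in> {i. i < n \<and> perm_of (\<phi> ?u) i \<in> K' ?u} \<longleftrightarrow>
      perm_of (D e) i \<in> {i. i < n \<and> perm_of (\<phi> ?v) i \<in> K' ?v}"
    using i D e permutes_less unfolding vbundle_def by auto
qed auto

lemma invariant_sheets_pushforward:
  assumes G: "simple_model G" and \<phi>: "iso_witness G n D D' \<phi>" and D': "vbundle G n D'"
    and K: "invariant_sheets G n (\<lambda>e. perm_of (D e)) K"
  shows "invariant_sheets G n (\<lambda>e. perm_of (D' e)) (\<lambda>v. perm_of (\<phi> v) ` K v)"
  unfolding invariant_sheets_def
proof (intro conjI ballI allI impI)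
  have \<tau>: "perm_of (\<phi> v) permutes {..<n}" if "v \<in> mg_verts G" for v
    using \<phi> that unfolding iso_witness_def star_sec_def by blast
  fix e j assume e: "e \<in> mg_edges G" and j: "j < n"
  let ?u = "mg_src G e" and ?v = "mg_tgt G e"
  note \<tau>u = \<tau>[OF simple_modelD(3)[OF G e]] and \<tau>v = \<tau>[OF simple_modelD(4)[OF G e]]
  define i where "i = inv (perm_of (\<phi> ?u)) j"
  have i: "i < n" "perm_of (\<phi> ?u) i = j"
    unfolding i_def using permutes_less(2)[OF \<tau>u j] permutes_inverses(1)[OF \<tau>u] by simp_all
  have "j \<in> perm_of (\<phi> ?u) ` K ?u \<longleftrightarrow> i \<in> K ?u"
    using i(2) inj_image_mem_iff[OF permutes_inj[OF \<tau>u]] by blast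
  also have "\<dots> \<longleftrightarrow> perm_of (D e) i \<in> K ?v"
    using K e i(1) unfolding invariant_sheets_def by blast
  also have "\<dots> \<longleftrightarrow> perm_of (\<phi> ?v) (perm_of (D e) i) \<in> perm_of (\<phi> ?v) ` K ?v"
    using inj_image_mem_iff[OF permutes_inj[OF \<tau>v]] by blast
  also have "perm_of (\<phi> ?v) (perm_of (D e) i) = perm_of (D' e) j"
    using \<phi> e i unfolding iso_witness_def by fastforce
  finally show "j \<in> perm_of (\<phi> ?u) ` K ?u \<longleftrightarrow> perm_of (D' e) j \<in> perm_of (\<phi> ?v) ` K ?v" .
next
  fix v assume "v \<in> mg_verts G"
  then show "perm_of (\<phi> v) ` K v \<subseteq> {..<n}"
    using \<phi> K permutes_less(1) unfolding iso_witness_def star_sec_def invariant_sheets_def by blast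
qed

lemma exists_permutes_image_lessThan:
  assumes K: "K \<subseteq> {..<n}"
  shows "\<exists>\<tau>. \<tau> permutes {..<n} \<and> \<tau> ` K = {..<card K}"
proof -
  let ?m = "card K"
  have "finite K" using K finite_subset by blast
  then obtain f where f: "bij_betw f K {..<?m}"
    using finite_same_card_bij[of K "{..<?m}"] by auto
  have "card ({..<n} - K) = n - ?m" using card_Diff_subset[OF \<open>finite K\<close> K] by simp
  then obtain g where g: "bij_betw g ({..<n} - K) {?m..<n}"
    using finite_same_card_bij[of "{..<n} - K" "{?m..<n}"] by auto
  have "?m \<le> n" using card_mono[OF _ K] by simp
  define \<tau> where "\<tau> x = (if x \<in> K then f x else if x < n then g x else x)" for x
  have "bij_betw \<tau> K {..<?m}" using f by (rule bij_betw_cong[THEN iffD1, rotated]) (simp add: \<tau>_def)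
  moreover have "bij_betw \<tau> ({..<n} - K) {?m..<n}"
    using g by (rule bij_betw_cong[THEN iffD1, rotated]) (simp add: \<tau>_def)
  ultimately have "bij_betw \<tau> (K \<union> ({..<n} - K)) ({..<?m} \<union> {?m..<n})"
    by (rule bij_betw_combine) auto
  moreover have "K \<union> ({..<n} - K) = {..<n}" "{..<?m} \<union> {?m..<n} = {..<n}"
    using K \<open>?m \<le> n\<close> by auto
  ultimately have "\<tau> permutes {..<n}"
    using K by (intro bij_imp_permutes) (auto simp: \<tau>_def)
  with \<open>bij_betw \<tau> K {..<?m}\<close> show ?thesis by (auto simp: bij_betw_def)
qed

definition relabel :: "('v,'e) mgraph \<Rightarrow> ('v \<Rightarrow> nat \<Rightarrow> nat) \<Rightarrow> 'e tdata \<Rightarrow> 'e tdata" where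
  "relabel G \<tau> D = (\<lambda>e. (\<tau> (mg_tgt G e) \<circ> perm_of (D e) \<circ> inv (\<tau> (mg_src G e)),
      offset_of (D e) \<circ> inv (\<tau> (mg_src G e)), slopes_of (D e) \<circ> inv (\<tau> (mg_src G e))))"

lemma vbundle_relabel:
  assumes G: "simple_model G" and D: "vbundle G n D"
    and \<tau>: "\<forall>v\<in>mg_verts G. \<tau> v permutes {..<n}"
  shows "vbundle G n (relabel G \<tau> D)"
  unfolding vbundle_def relabel_def
  using D \<tau> simple_modelD(3,4)[OF G]
  by (auto simp: vbundle_def intro!: permutes_compose permutes_inv)

lemma iso_witness_relabel:
  assumes G: "simple_model G" and \<tau>: "\<forall>v\<in>mg_verts G. \<tau> v permutes {..<n}"
  shows "iso_witness G n D (relabel G \<tau> D) (\<lambda>v. (\<tau> v, \<lambda>_. 0, \<lambda>_ _. 0))"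
  unfolding iso_witness_def star_sec_def relabel_def
  using \<tau> simple_modelD(3)[OF G] permutes_inverses(2) by fastforce

lemma degree_restrict_td: "degree G m (restrict_td m D) = sheet_degree G D (\<lambda>_. {..<m})"
  unfolding degree_def sheet_degree_def restrict_td_def by simp

lemma vbundle_restrict_td:
  assumes D: "vbundle G n D" and block: "invariant_sheets G n (\<lambda>e. perm_of (D e)) (\<lambda>_. {..<m})"
    and "m \<le> n"
  shows "vbundle G m (restrict_td m D)"
  unfolding vbundle_def
proof
  fix e assume e: "e \<in> mg_edges G"
  have "perm_of (D e) i < m" if "i < m" for i
    using block e that less_le_trans[OF that \<open>m \<le> n\<close>] unfolding invariant_sheets_def by blast
  then have "perm_of (D e) ` {..<m} \<subseteq> {..<m}" by auto
  moreover have "inj_on (perm_of (D e)) {..<m}"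
    using D e permutes_inj_on unfolding vbundle_def by blast
  ultimately have "bij_betw (perm_of (D e)) {..<m} {..<m}"
    using endo_inj_surj[of "{..<m}"] by (simp add: bij_betw_def)
  then have "restrict_id (perm_of (D e)) {..<m} permutes {..<m}"
    by (rule permutes_restrict_id)
  then show "perm_of (restrict_td m D e) permutes {..<m}"
    by (simp add: restrict_td_def restrict_id_def)
qed

lemma permutes_block_iff:
  fixes \<sigma> :: "nat \<Rightarrow> nat"
  assumes \<sigma>: "\<sigma> permutes {..<n}" and block: "\<forall>i<n. m \<le> i \<longrightarrow> m \<le> \<sigma> i" and i: "i < n"
  shows "i < m \<longleftrightarrow> \<sigma> i < m"
proof
  assume "\<sigma> i < m"
  then show "i < m" using block i not_less by blast
next
  assume "i < m"
  have "\<sigma> ` {m..<n} \<subseteq> {m..<n}" using block permutes_less(1)[OF \<sigma>] by auto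
  then have "\<sigma> ` {m..<n} = {m..<n}"
    by (rule endo_inj_surj[OF finite_atLeastLessThan _ permutes_inj_on[OF \<sigma>]])
  moreover have "i \<notin> {m..<n}" using \<open>i < m\<close> by simp
  ultimately have "\<sigma> i \<notin> {m..<n}"
    using inj_image_mem_iff[OF permutes_inj[OF \<sigma>], of i "{m..<n}"] by simp
  then show "\<sigma> i < m" using permutes_less(1)[OF \<sigma> i] by simp
qed

text \<open>Relabelling the sheets over every vertex so that \<open>K\<close> becomes \<open>{..<m}\<close> puts all transition
  matrices in block form.\<close>

lemma invariant_sheets_imp_subbundle:
  assumes G: "compact_connected_metric_graph G" and D: "vbundle G n D"
    and K: "invariant_sheets G n (\<lambda>e. perm_of (D e)) K" and v0: "v0 \<in> mg_verts G"
  shows "\<exists>F. subbundle G (card (K v0)) F n D \<and> degree G (card (K v0)) F = sheet_degree G D K"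
proof -
  let ?m = "card (K v0)"
  have sm: "simple_model G" using G unfolding compact_connected_metric_graph_def by blast
  have perms: "\<forall>e\<in>mg_edges G. perm_of (D e) permutes {..<n}" using D unfolding vbundle_def .
  have "\<exists>\<tau>. \<tau> permutes {..<n} \<and> \<tau> ` K v = {..<?m}" if "v \<in> mg_verts G" for v
    using exists_permutes_image_lessThan[of "K v" n] K that
      card_invariant_sheets_eq[OF G K perms that v0] unfolding invariant_sheets_def by auto
  then obtain \<tau> where \<tau>: "\<forall>v\<in>mg_verts G. \<tau> v permutes {..<n} \<and> \<tau> v ` K v = {..<?m}"
    by metis
  define D' where "D' = relabel G \<tau> D"
  have \<phi>: "iso_witness G n D D' (\<lambda>v. (\<tau> v, \<lambda>_. 0, \<lambda>_ _. 0))"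
    unfolding D'_def using iso_witness_relabel[OF sm] \<tau> by blast
  have D': "vbundle G n D'" unfolding D'_def using vbundle_relabel[OF sm D] \<tau> by blast
  have iso: "bundle_iso G n D D'" using bundle_iso_iff_witness[OF sm] D D' \<phi> by blast
  have block: "invariant_sheets G n (\<lambda>e. perm_of (D' e)) (\<lambda>_. {..<?m})"
    using invariant_sheets_pushforward[OF sm \<phi> D' K] \<tau>
      invariant_sheets_cong[OF sm, of "\<lambda>v. \<tau> v ` K v" "\<lambda>_. {..<?m}"] by simp
  have "?m \<le> n" using K v0 card_mono[of "{..<n}" "K v0"] unfolding invariant_sheets_def by auto
  have F: "vbundle G ?m (restrict_td ?m D')"
    by (rule vbundle_restrict_td[OF D' block \<open>?m \<le> n\<close>])
  have "subbundle G ?m (restrict_td ?m D') n D"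
    unfolding subbundle_def using \<open>?m \<le> n\<close> F iso block bundle_iso_refl[OF sm F]
    by (auto simp: invariant_sheets_def not_less[symmetric])
  moreover have "degree G ?m (restrict_td ?m D') = sheet_degree G D K"
    unfolding degree_restrict_td sheet_degree_iso_witness[OF sm \<phi> D K]
    using \<tau> by (intro sheet_degree_cong[OF sm]) simp
  ultimately show ?thesis by blast
qed

lemma degree_bundle_iso:
  assumes G: "simple_model G" and "bundle_iso G n D D'"
  shows "degree G n D = degree G n D'"
proof -
  obtain \<phi> where D: "vbundle G n D" and \<phi>: "iso_witness G n D D' \<phi>"
    using assms bundle_iso_iff_witness[OF G] by blast
  have "perm_of (\<phi> v) ` {..<n} = {..<n}" if "v \<in> mg_verts G" for v
    using \<phi> that permutes_image unfolding iso_witness_def star_sec_def by blast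
  then show ?thesis
    unfolding degree_eq_sheet_degree
      sheet_degree_iso_witness[OF G \<phi> D invariant_sheets_lessThan[OF D]]
    by (intro sheet_degree_cong[OF G]) simp
qed

lemma subbundle_imp_invariant_sheets:
  assumes G: "simple_model G" and F: "subbundle G m F n D"
  shows "\<exists>K. invariant_sheets G n (\<lambda>e. perm_of (D e)) K \<and> (\<forall>v\<in>mg_verts G. card (K v) = m)
           \<and> degree G m F = sheet_degree G D K"
proof -
  obtain D' where "m \<le> n" and "vbundle G m F" and iso: "bundle_iso G n D D'"
    and block: "\<forall>e\<in>mg_edges G. \<forall>i<n. m \<le> i \<longrightarrow> m \<le> perm_of (D' e) i"
    and isoF: "bundle_iso G m F (restrict_td m D')"
    using F unfolding subbundle_def by blast
  obtain \<phi> where D: "vbundle G n D" and D': "vbundle G n D'" and \<phi>: "iso_witness G n D D' \<phi>"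
    using iso bundle_iso_iff_witness[OF G] by blast
  have "invariant_sheets G n (\<lambda>e. perm_of (D' e)) (\<lambda>_. {..<m})"
    unfolding invariant_sheets_def
  proof (intro conjI ballI allI impI)
    fix e i assume "e \<in> mg_edges G" "i < n"
    then show "i \<in> {..<m} \<longleftrightarrow> perm_of (D' e) i \<in> {..<m}"
      using permutes_block_iff[of "perm_of (D' e)" n m i] D' block unfolding vbundle_def by simp
  qed (use \<open>m \<le> n\<close> in auto)
  define K where "K v = {i. i < n \<and> perm_of (\<phi> v) i \<in> {..<m}}" for v
  have K: "invariant_sheets G n (\<lambda>e. perm_of (D e)) K"
    unfolding K_def by (rule invariant_sheets_pullback[OF G \<phi> D]) fact
  have \<tau>: "perm_of (\<phi> v) permutes {..<n}" if "v \<in> mg_verts G" for v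
    using \<phi> that unfolding iso_witness_def star_sec_def by blast
  have image: "perm_of (\<phi> v) ` K v = {..<m}" if "v \<in> mg_verts G" for v
  proof -
    have "K v = perm_of (\<phi> v) -` {..<m}"
      unfolding K_def using permutes_not_in[OF \<tau>[OF that]] \<open>m \<le> n\<close> by fastforce
    then show ?thesis using permutes_surj[OF \<tau>[OF that]] by (simp add: image_vimage_eq)
  qed
  have card: "card (K v) = m" if "v \<in> mg_verts G" for v
    using card_image[OF permutes_inj_on[OF \<tau>[OF that]], of "K v"] image[OF that] by simp
  have "degree G m F = degree G m (restrict_td m D')"
    by (rule degree_bundle_iso[OF G isoF])
  also have "\<dots> = sheet_degree G D K"
    unfolding degree_restrict_td sheet_degree_iso_witness[OF G \<phi> D K]
    using image by (intro sheet_degree_cong[OF G]) simp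
  finally show ?thesis using K card by blast
qed

section \<open>Bundles of local systems are semistable of degree zero\<close>

lemma vbundle_E_of: "local_system G n L \<Longrightarrow> vbundle G n (E_of L)"
  unfolding local_system_def vbundle_def E_of_def by simp

lemma perm_of_E_of [simp]: "perm_of (E_of L e) = perm_of (L e)"
  unfolding E_of_def by simp

lemma degree_E_of: "degree G n (E_of L) = 0"
  unfolding degree_def E_of_def by simp

lemma degree_subbundle_iso_E_of:
  assumes G: "simple_model G" and iso: "bundle_iso G n D (E_of L)" and F: "subbundle G m F n D"
  shows "degree G m F = 0"
proof -
  obtain K where K: "invariant_sheets G n (\<lambda>e. perm_of (D e)) K"
    and deg: "degree G m F = sheet_degree G D K"
    using subbundle_imp_invariant_sheets[OF G F] by blast
  obtain \<chi> where D: "vbundle G n D" and \<chi>: "iso_witness G n D (E_of L) \<chi>"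
    using iso bundle_iso_iff_witness[OF G] by blast
  show ?thesis
    using deg sheet_degree_iso_witness[OF G \<chi> D K] by (simp add: sheet_degree_E_of)
qed

lemma semistable_if_iso_E_of:
  assumes G: "simple_model G" and iso: "bundle_iso G n D (E_of L)"
  shows "semistable G n D \<and> degree G n D = 0"
proof -
  have "degree G n D = 0"
    using degree_bundle_iso[OF G iso] by (simp add: degree_E_of)
  moreover have "vbundle G n D" using iso unfolding bundle_iso_def by blast
  ultimately show ?thesis
    unfolding semistable_def slope_def using degree_subbundle_iso_E_of[OF G iso] by simp
qed

lemma indecomposable_if_stable_E_of:
  assumes G: "compact_connected_metric_graph G" and L: "local_system G n L"
    and stable: "stable G n (E_of L)"
  shows "indecomposable G n L"
proof (rule ccontr)
  let ?\<sigma> = "\<lambda>e. perm_of (L e)"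
  have perms: "\<forall>e\<in>mg_edges G. ?\<sigma> e permutes {..<n}" using L unfolding local_system_def .
  assume "\<not> indecomposable G n L"
  then obtain u i j where u: "u \<in> mg_verts G" and "i < n" "j < n"
    and unreachable: "\<And>w. is_walk G u w u \<Longrightarrow> transport ?\<sigma> w i \<noteq> j"
    unfolding indecomposable_def by blast
  let ?K = "cover_component G n ?\<sigma> u i"
  have K: "invariant_sheets G n (\<lambda>e. perm_of (E_of L e)) ?K"
    using invariant_sheets_cover_component[OF perms] by simp
  obtain F where F: "subbundle G (card (?K u)) F n (E_of L)"
    and deg: "degree G (card (?K u)) F = sheet_degree G (E_of L) ?K"
    using invariant_sheets_imp_subbundle[OF G vbundle_E_of[OF L] K u] by blast
  have sub: "?K u \<subseteq> {..<n}" unfolding cover_component_def by blast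
  have "i \<in> ?K u" using start_in_cover_component[OF \<open>i < n\<close>] .
  then have "0 < card (?K u)" using finite_subset[OF sub] card_gt_0_iff by blast
  moreover have "j \<notin> ?K u" using unreachable unfolding cover_component_def by blast
  then have "card (?K u) < n"
    using psubset_card_mono[of "{..<n}" "?K u"] sub \<open>j < n\<close> by auto
  ultimately have "slope G (card (?K u)) F < slope G n (E_of L)"
    using stable F unfolding stable_def by blast
  then show False
    using deg unfolding slope_def by (simp add: sheet_degree_E_of degree_E_of)
qed

lemma stable_E_of_if_indecomposable:
  assumes G: "compact_connected_metric_graph G" and L: "local_system G n L"
    and indec: "indecomposable G n L"
  shows "stable G n (E_of L)"
proof -
  let ?\<sigma> = "\<lambda>e. perm_of (L e)"
  have sm: "simple_model G" using G unfolding compact_connected_metric_graph_def by blast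
  have perms: "\<forall>e\<in>mg_edges G. ?\<sigma> e permutes {..<n}" using L unfolding local_system_def .
  obtain v0 where v0: "v0 \<in> mg_verts G" using sm unfolding simple_model_def by blast
  have no_sub: "\<not> subbundle G m F n (E_of L)" if "0 < m" "m < n" for m F
  proof
    assume "subbundle G m F n (E_of L)"
    then obtain K where K': "invariant_sheets G n (\<lambda>e. perm_of (E_of L e)) K"
      and card: "\<forall>v\<in>mg_verts G. card (K v) = m"
      using subbundle_imp_invariant_sheets[OF sm] by blast
    from K' have K: "invariant_sheets G n ?\<sigma> K" by simp
    have sub: "K v0 \<subseteq> {..<n}" using K v0 unfolding invariant_sheets_def by blast
    have "card (K v0) = m" using card v0 by blast
    then obtain i where i: "i \<in> K v0" using \<open>0 < m\<close> by (metis card.empty ex_in_conv less_irrefl)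
    have "\<not> {..<n} \<subseteq> K v0"
      using card_mono[of "K v0" "{..<n}"] finite_subset[OF sub] \<open>card (K v0) = m\<close> \<open>m < n\<close> by auto
    then obtain j where j: "j < n" "j \<notin> K v0" by auto
    have "i < n" using i sub by auto
    then obtain w where w: "is_walk G v0 w v0" "transport ?\<sigma> w i = j"
      using indec v0 j(1) unfolding indecomposable_def by blast
    have "transport ?\<sigma> w i \<in> K v0"
      by (rule transport_in_invariant_sheets[OF K perms w(1) \<open>i < n\<close> i])
    then show False using w(2) j(2) by simp
  qed
  show ?thesis using no_sub vbundle_E_of[OF L] unfolding stable_def by simp
qed

section \<open>Semistable bundles of degree zero come from local systems\<close>

lemma sheet_degree_nonpos_if_semistable:
  assumes G: "compact_connected_metric_graph G"
    and ss: "semistable G n D" and "degree G n D = 0"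
    and K: "invariant_sheets G n (\<lambda>e. perm_of (D e)) K"
  shows "sheet_degree G D K \<le> 0"
proof -
  have sm: "simple_model G" using G unfolding compact_connected_metric_graph_def by blast
  have D: "vbundle G n D" using ss unfolding semistable_def by blast
  then have perms: "\<forall>e\<in>mg_edges G. perm_of (D e) permutes {..<n}" unfolding vbundle_def .
  obtain v0 where v0: "v0 \<in> mg_verts G" using sm unfolding simple_model_def by blast
  show ?thesis
  proof (cases "card (K v0) = 0")
    case True
    have "K v = {}" if "v \<in> mg_verts G" for v
      using card_invariant_sheets_eq[OF G K perms that v0] True finite_subset[of "K v" "{..<n}"]
        K that unfolding invariant_sheets_def by auto
    then have "sheet_degree G D K = sheet_degree G D (\<lambda>_. {})"
      by (rule sheet_degree_cong[OF sm])
    then show ?thesis by (simp add: sheet_degree_def)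
  next
    case False
    obtain F where F: "subbundle G (card (K v0)) F n D"
      and deg: "degree G (card (K v0)) F = sheet_degree G D K"
      using invariant_sheets_imp_subbundle[OF G D K v0] by blast
    have "slope G (card (K v0)) F \<le> slope G n D"
      using ss F False unfolding semistable_def by simp
    then show ?thesis
      using deg \<open>degree G n D = 0\<close> False unfolding slope_def by (simp add: divide_le_0_iff)
  qed
qed

lemma sheet_degree_eq_0_if_semistable:
  assumes G: "compact_connected_metric_graph G"
    and ss: "semistable G n D" and d0: "degree G n D = 0"
    and K: "invariant_sheets G n (\<lambda>e. perm_of (D e)) K"
  shows "sheet_degree G D K = 0"
proof -
  have sm: "simple_model G" using G unfolding compact_connected_metric_graph_def by blast
  have D: "vbundle G n D" using ss unfolding semistable_def by blast
  show ?thesis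
    using sheet_degree_nonpos_if_semistable[OF G ss d0 K]
      sheet_degree_nonpos_if_semistable[OF G ss d0 invariant_sheets_Diff[OF D K]]
      sheet_degree_add_Diff[OF sm K, of D] d0 by linarith
qed

text \<open>A flow \<open>x\<close> on the cover assigns \<open>x e i\<close> to the edge over \<open>e\<close> starting on sheet \<open>i\<close>;
  \<open>cover_div G \<sigma> x v k\<close> is its net outflow at sheet \<open>k\<close> over \<open>v\<close>.\<close>

definition cover_div :: "('v,'e) mgraph \<Rightarrow> ('e \<Rightarrow> nat \<Rightarrow> nat) \<Rightarrow> ('e \<Rightarrow> nat \<Rightarrow> int) \<Rightarrow> 'v \<Rightarrow> nat \<Rightarrow> int"
  where "cover_div G \<sigma> x v k = (\<Sum>e\<in>out_edges G v. x e k) - (\<Sum>e\<in>in_edges G v. x e (inv (\<sigma> e) k))"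

lemma cover_div_add:
  "cover_div G \<sigma> (\<lambda>e k. x e k + y e k) v k = cover_div G \<sigma> x v k + cover_div G \<sigma> y v k"
  unfolding cover_div_def by (simp add: sum.distrib)

lemma cover_div_diff:
  "cover_div G \<sigma> (\<lambda>e k. x e k - y e k) v k = cover_div G \<sigma> x v k - cover_div G \<sigma> y v k"
  unfolding cover_div_def by (simp add: sum_subtractf)

lemma cover_div_scale: "cover_div G \<sigma> (\<lambda>e k. c * x e k) v k = c * cover_div G \<sigma> x v k"
  unfolding cover_div_def by (simp add: sum_distrib_left right_diff_distrib)

lemma cover_div_sum:
  "cover_div G \<sigma> (\<lambda>e k. \<Sum>p\<in>P. x p e k) v k = (\<Sum>p\<in>P. cover_div G \<sigma> (x p) v k)"
  unfolding cover_div_def by (simp add: sum_subtractf sum.swap[of _ P])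

lemma cover_div_indicator:
  assumes fin: "finite (mg_edges G)" and e: "e \<in> mg_edges G" and \<sigma>: "\<sigma> e permutes {..<n}"
  shows "cover_div G \<sigma> (\<lambda>e' k. of_bool (e' = e \<and> k = i)) v k
     = of_bool (mg_src G e = v \<and> k = i) - of_bool (mg_tgt G e = v \<and> k = \<sigma> e i)"
proof -
  have delta: "(\<Sum>e'\<in>S. of_bool (e' = e \<and> P e') :: int) = of_bool (e \<in> S \<and> P e)"
    if "finite S" for S P
  proof -
    have "(\<Sum>e'\<in>S. of_bool (e' = e \<and> P e') :: int) = (\<Sum>e'\<in>S. if e' = e then of_bool (P e) else 0)"
      by (intro sum.cong) auto
    then show ?thesis using that by (simp add: sum.delta)
  qed
  have "finite (out_edges G v)" "finite (in_edges G v)" using fin by simp_all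
  then have "cover_div G \<sigma> (\<lambda>e' k. of_bool (e' = e \<and> k = i)) v k
     = of_bool (e \<in> out_edges G v \<and> k = i) - of_bool (e \<in> in_edges G v \<and> inv (\<sigma> e) k = i)"
    unfolding cover_div_def by (simp only: delta)
  moreover have "inv (\<sigma> e) k = i \<longleftrightarrow> k = \<sigma> e i" using permutes_inverses[OF \<sigma>] by metis
  ultimately show ?thesis using e by simp
qed

fun walk_flow :: "('e \<Rightarrow> nat \<Rightarrow> nat) \<Rightarrow> ('e \<times> bool) list \<Rightarrow> nat \<Rightarrow> 'e \<Rightarrow> nat \<Rightarrow> int" where
  "walk_flow \<sigma> [] i e k = 0"
| "walk_flow \<sigma> ((e', True) # w) i e k = of_bool (e = e' \<and> k = i) + walk_flow \<sigma> w (\<sigma> e' i) e k"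
| "walk_flow \<sigma> ((e', False) # w) i e k
     = walk_flow \<sigma> w (inv (\<sigma> e') i) e k - of_bool (e = e' \<and> k = inv (\<sigma> e') i)"

lemma cover_div_walk_flow:
  assumes fin: "finite (mg_edges G)" and perms: "\<forall>e\<in>mg_edges G. \<sigma> e permutes {..<n}"
  shows "is_walk G u w v \<Longrightarrow> cover_div G \<sigma> (walk_flow \<sigma> w i) q k
     = of_bool (q = u \<and> k = i) - of_bool (q = v \<and> k = transport \<sigma> w i)"
proof (induction arbitrary: i rule: is_walk_induct)
  case (Nil u)
  then show ?case by (simp add: cover_div_def)
next
  case (Fwd e w v)
  then have \<sigma>: "\<sigma> e permutes {..<n}" using perms by blast
  have "walk_flow \<sigma> ((e, True) # w) i
      = (\<lambda>e' k. of_bool (e' = e \<and> k = i) + walk_flow \<sigma> w (\<sigma> e i) e' k)"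
    by (intro ext) simp
  then show ?case
    by (simp add: cover_div_add cover_div_indicator[where \<sigma>=\<sigma>, OF fin Fwd.hyps(1) \<sigma>] Fwd.IH)
next
  case (Bwd e w v)
  then have \<sigma>: "\<sigma> e permutes {..<n}" using perms by blast
  have "walk_flow \<sigma> ((e, False) # w) i
      = (\<lambda>e' k. walk_flow \<sigma> w (inv (\<sigma> e) i) e' k - of_bool (e' = e \<and> k = inv (\<sigma> e) i))"
    by (intro ext) simp
  then show ?case
    using permutes_inverses(1)[OF \<sigma>, of i]
    by (simp add: cover_div_diff cover_div_indicator[where \<sigma>=\<sigma>, OF fin Bwd.hyps(1) \<sigma>] Bwd.IH)
qed

text \<open>Every sheet is labelled by the least sheet over the base point \<open>v0\<close> in its component
  of the cover, and joined to it by a walk.\<close>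

lemma exists_component_labelling:
  assumes G: "compact_connected_metric_graph G" and perms: "\<forall>e\<in>mg_edges G. \<sigma> e permutes {..<n}"
    and v0: "v0 \<in> mg_verts G"
  shows "\<exists>base W. (\<forall>e\<in>mg_edges G. \<forall>j<n. base (mg_src G e) j = base (mg_tgt G e) (\<sigma> e j)) \<and>
    (\<forall>v\<in>mg_verts G. \<forall>j<n. is_walk G v0 (W v j) v \<and> transport \<sigma> (W v j) (base v j) = j)"
proof -
  define base where "base v j = Min {i. i < n \<and> j \<in> cover_component G n \<sigma> v0 i v}" for v j
  define W where "W v j = (SOME w. is_walk G v0 w v \<and> transport \<sigma> w (base v j) = j)" for v j
  have "base (mg_src G e) j = base (mg_tgt G e) (\<sigma> e j)" if "e \<in> mg_edges G" "j < n" for e j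
    unfolding base_def using invariant_sheets_cover_component[OF perms] that
    unfolding invariant_sheets_def by simp
  moreover have "is_walk G v0 (W v j) v \<and> transport \<sigma> (W v j) (base v j) = j"
    if "v \<in> mg_verts G" "j < n" for v j
  proof -
    have "base v j \<in> {i. i < n \<and> j \<in> cover_component G n \<sigma> v0 i v}"
      unfolding base_def using cover_component_through_every_sheet[OF G perms v0 that]
      by (intro Min_in) auto
    then have "\<exists>w. is_walk G v0 w v \<and> transport \<sigma> w (base v j) = j"
      unfolding cover_component_def by blast
    then show ?thesis unfolding W_def by (rule someI_ex)
  qed
  ultimately show ?thesis by blast
qed

lemma invariant_sheets_label_class:
  assumes perms: "\<forall>e\<in>mg_edges G. \<sigma> e permutes {..<n}"
    and base: "\<forall>e\<in>mg_edges G. \<forall>j<n. base (mg_src G e) j = base (mg_tgt G e) (\<sigma> e j)"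
  shows "invariant_sheets G n \<sigma> (\<lambda>v. {j. j < n \<and> base v j = k})"
  unfolding invariant_sheets_def
proof (intro conjI ballI allI impI)
  fix e i assume "e \<in> mg_edges G" "i < n"
  moreover from this have "\<sigma> e i < n" using perms permutes_less(1) by blast
  ultimately show "i \<in> {j. j < n \<and> base (mg_src G e) j = k}
      \<longleftrightarrow> \<sigma> e i \<in> {j. j < n \<and> base (mg_tgt G e) j = k}"
    using base by simp
qed auto

lemma sum_sum_of_bool_delta:
  fixes n :: nat
  assumes "finite V" and "q \<in> V" and "k < n"
  shows "(\<Sum>v\<in>V. \<Sum>j<n. of_bool (q = v \<and> k = j) * d v j) = (d q k :: int)"
proof -
  have "(\<Sum>j<n. of_bool (q = v \<and> k = j) * d v j) = (if v = q then d q k else 0)" for v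
  proof -
    have "(\<Sum>j<n. of_bool (q = v \<and> k = j) * d v j)
        = (\<Sum>j<n. if j = k then (if v = q then d q k else 0) else 0)"
      by (intro sum.cong) auto
    then show ?thesis using assms(3) by simp
  qed
  then show ?thesis using assms(1,2) by simp
qed

text \<open>The flow is a combination of unit flows along walks from the base point, one for each
  sheet \<open>(v, j)\<close> with weight \<open>d v j\<close>; their contributions at the base point cancel since
  \<open>d\<close> sums to zero over each class of sheets with the same label.\<close>

lemma exists_flow_with_cover_div:
  assumes G: "compact_connected_metric_graph G" and perms: "\<forall>e\<in>mg_edges G. \<sigma> e permutes {..<n}"
    and balanced: "\<And>K. invariant_sheets G n \<sigma> K \<Longrightarrow> (\<Sum>v\<in>mg_verts G. \<Sum>j\<in>K v. d v j) = 0"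
  shows "\<exists>x. \<forall>v\<in>mg_verts G. \<forall>k<n. cover_div G \<sigma> x v k = d v k"
proof -
  have sm: "simple_model G" using G unfolding compact_connected_metric_graph_def by blast
  note fin = simple_modelD(1,2)[OF sm]
  obtain v0 where v0: "v0 \<in> mg_verts G" using sm unfolding simple_model_def by blast
  obtain base W
    where base: "\<forall>e\<in>mg_edges G. \<forall>j<n. base (mg_src G e) j = base (mg_tgt G e) (\<sigma> e j)"
      and W: "\<forall>v\<in>mg_verts G. \<forall>j<n. is_walk G v0 (W v j) v \<and> transport \<sigma> (W v j) (base v j) = j"
    using exists_component_labelling[OF G perms v0] by blast
  have flow_div: "cover_div G \<sigma> (walk_flow \<sigma> (W v j) (base v j)) q k
      = of_bool (q = v0 \<and> k = base v j) - of_bool (q = v \<and> k = j)"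
    if "v \<in> mg_verts G" "j < n" for v j q k
    using cover_div_walk_flow[OF fin(2) perms, of v0 "W v j" v] W that by simp
  have label_balanced: "(\<Sum>v\<in>mg_verts G. \<Sum>j<n. of_bool (base v j = k) * d v j) = 0" for k
  proof -
    have "(\<Sum>j<n. of_bool (base v j = k) * d v j) = (\<Sum>j\<in>{j. j < n \<and> base v j = k}. d v j)"
      for v
    proof -
      have "{j. j < n \<and> base v j = k} = {j\<in>{..<n}. base v j = k}" by auto
      then show ?thesis
        by (simp only: sum.inter_filter[OF finite_lessThan]) (intro sum.cong; simp)
    qed
    then show ?thesis using balanced[OF invariant_sheets_label_class[OF perms base]] by simp
  qed
  define x where "x e k = (\<Sum>v\<in>mg_verts G. \<Sum>j<n. - d v j * walk_flow \<sigma> (W v j) (base v j) e k)"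
    for e k
  have "cover_div G \<sigma> x q k = d q k" if q: "q \<in> mg_verts G" and k: "k < n" for q k
  proof -
    have "cover_div G \<sigma> x q k = (\<Sum>v\<in>mg_verts G. \<Sum>j<n.
        - d v j * (of_bool (q = v0 \<and> k = base v j) - of_bool (q = v \<and> k = j)))"
      unfolding x_def cover_div_sum cover_div_scale
      by (intro sum.cong refl) (simp add: flow_div)
    also have "\<dots> = (\<Sum>v\<in>mg_verts G. \<Sum>j<n. of_bool (q = v \<and> k = j) * d v j)
        - of_bool (q = v0) * (\<Sum>v\<in>mg_verts G. \<Sum>j<n. of_bool (base v j = k) * d v j)"
      by (simp add: algebra_simps sum_subtractf sum_distrib_left of_bool_def eq_commute[of k])
    also have "\<dots> = d q k"
      using sum_sum_of_bool_delta[OF fin(1) q k] label_balanced[of k] by simp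
    finally show ?thesis .
  qed
  then show ?thesis by (intro exI[of _ x]) blast
qed

lemma sum_in_edges_invariant_sheets:
  assumes G: "simple_model G" and K: "invariant_sheets G n \<sigma> K"
    and perms: "\<forall>e\<in>mg_edges G. \<sigma> e permutes {..<n}"
  shows "(\<Sum>v\<in>mg_verts G. \<Sum>j\<in>K v. \<Sum>e\<in>in_edges G v. g e (inv (\<sigma> e) j))
       = (\<Sum>e\<in>mg_edges G. \<Sum>i\<in>K (mg_src G e). g e i)"
proof -
  note fin = simple_modelD(1,2)[OF G]
  have "(\<Sum>v\<in>mg_verts G. \<Sum>j\<in>K v. \<Sum>e\<in>in_edges G v. g e (inv (\<sigma> e) j))
      = (\<Sum>v\<in>mg_verts G. \<Sum>e\<in>in_edges G v. \<Sum>j\<in>K (mg_tgt G e). g e (inv (\<sigma> e) j))"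
    by (intro sum.cong refl, subst sum.swap) auto
  also have "\<dots> = (\<Sum>e\<in>mg_edges G. \<Sum>j\<in>K (mg_tgt G e). g e (inv (\<sigma> e) j))"
    by (rule sum.group[OF fin(2,1)]) (use simple_modelD(4)[OF G] in auto)
  also have "\<dots> = (\<Sum>e\<in>mg_edges G. \<Sum>i\<in>K (mg_src G e). g e i)"
  proof (rule sum.cong[OF refl])
    fix e assume e: "e \<in> mg_edges G"
    then have \<sigma>: "\<sigma> e permutes {..<n}" using perms by blast
    have "(\<Sum>i\<in>K (mg_src G e). g e (inv (\<sigma> e) (\<sigma> e i))) = (\<Sum>j\<in>K (mg_tgt G e). g e (inv (\<sigma> e) j))"
      by (rule sum.reindex_bij_betw[OF invariant_sheets_bij_betw[OF G K e \<sigma>]])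
    then show "(\<Sum>j\<in>K (mg_tgt G e). g e (inv (\<sigma> e) j)) = (\<Sum>i\<in>K (mg_src G e). g e i)"
      using permutes_inverses(2)[OF \<sigma>] by simp
  qed
  finally show ?thesis .
qed

lemma sum_star_edges_cover_div:
  assumes G: "simple_model G"
    and out: "\<And>e. e \<in> out_edges G v \<Longrightarrow> r e = x e j"
    and into: "\<And>e. e \<in> in_edges G v \<Longrightarrow> r e = c e - x e (inv (\<sigma> e) j)"
  shows "(\<Sum>e\<in>star_edges G v. r e) = cover_div G \<sigma> x v j + (\<Sum>e\<in>in_edges G v. c e)"
  unfolding sum_star_edges[OF G] cover_div_def
  using out into by (simp add: sum_subtractf)

lemma exists_flow_if_semistable:
  assumes G: "compact_connected_metric_graph G"
    and ss: "semistable G n D" and d0: "degree G n D = 0"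
  shows "\<exists>x. \<forall>v\<in>mg_verts G. \<forall>k<n. cover_div G (\<lambda>e. perm_of (D e)) x v k
           = - (\<Sum>e\<in>in_edges G v. slopes_of (D e) (inv (perm_of (D e)) k))"
proof -
  let ?\<sigma> = "\<lambda>e. perm_of (D e)" and ?s = "\<lambda>e. slopes_of (D e)"
  have sm: "simple_model G" using G unfolding compact_connected_metric_graph_def by blast
  have perms: "\<forall>e\<in>mg_edges G. ?\<sigma> e permutes {..<n}"
    using ss unfolding semistable_def vbundle_def by blast
  show ?thesis
  proof (rule exists_flow_with_cover_div[OF G perms])
    fix K assume K: "invariant_sheets G n ?\<sigma> K"
    have "(\<Sum>v\<in>mg_verts G. \<Sum>j\<in>K v. - (\<Sum>e\<in>in_edges G v. ?s e (inv (?\<sigma> e) j)))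
        = - sheet_degree G D K"
      unfolding sheet_degree_def sum_in_edges_invariant_sheets[OF sm K perms, symmetric]
      by (simp add: sum_negf)
    then show "(\<Sum>v\<in>mg_verts G. \<Sum>j\<in>K v. - (\<Sum>e\<in>in_edges G v. ?s e (inv (?\<sigma> e) j))) = 0"
      using sheet_degree_eq_0_if_semistable[OF G ss d0 K] by simp
  qed
qed

text \<open>Splitting each slope \<open>s\<^sub>e(i)\<close> into \<open>x e i\<close> at the source and \<open>s\<^sub>e(i) - x e i\<close> at the
  target gives sections that are harmonic exactly because of the divergence of \<open>x\<close>, and that
  remove all slopes.\<close>

lemma iso_E_of_if_flow:
  assumes G: "simple_model G" and D: "vbundle G n D"
    and x: "\<forall>v\<in>mg_verts G. \<forall>k<n. cover_div G (\<lambda>e. perm_of (D e)) x v k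
             = - (\<Sum>e\<in>in_edges G v. slopes_of (D e) (inv (perm_of (D e)) k))"
  shows "\<exists>L. local_system G n L \<and> bundle_iso G n D (E_of L)"
proof -
  let ?\<sigma> = "\<lambda>e. perm_of (D e)" and ?s = "\<lambda>e. slopes_of (D e)"
  have perms: "\<forall>e\<in>mg_edges G. ?\<sigma> e permutes {..<n}" using D unfolding vbundle_def .
  define r where
    "r v k e = (if mg_src G e = v then x e k else ?s e (inv (?\<sigma> e) k) - x e (inv (?\<sigma> e) k))"
    for v k e
  define L where
    "L e = (?\<sigma> e, \<lambda>i. offset_of (D e) i + of_int (r (mg_tgt G e) (?\<sigma> e i) e) * mg_len G e)"
    for e
  have L: "local_system G n L" unfolding local_system_def L_def using perms by simp
  have "iso_witness G n D (E_of L) (\<lambda>v. (id, \<lambda>_. 0, r v))"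
    unfolding iso_witness_def
  proof (intro conjI ballI allI impI)
    fix v assume v: "v \<in> mg_verts G"
    show "star_sec G n v (id, \<lambda>_. 0, r v)"
      unfolding star_sec_def
    proof (intro conjI allI impI)
      fix k assume "k < n"
      have "(\<Sum>e\<in>star_edges G v. r v k e)
          = cover_div G ?\<sigma> x v k + (\<Sum>e\<in>in_edges G v. ?s e (inv (?\<sigma> e) k))"
        by (rule sum_star_edges_cover_div[OF G])
           (use simple_modelD(5)[OF G] in \<open>auto simp: r_def\<close>)
      then show "(\<Sum>e\<in>star_edges G v. slopes_of (id, \<lambda>_. 0, r v) k e) = 0"
        using x v \<open>k < n\<close> by simp
    qed simp
  next
    fix e i assume e: "e \<in> mg_edges G" and "i < n"
    then have "?\<sigma> e permutes {..<n}" using perms by blast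
    then have "inv (?\<sigma> e) (?\<sigma> e i) = i" by (rule permutes_inverses(2))
    then show "perm_of (E_of L e) (perm_of (id, \<lambda>_. 0, r (mg_src G e)) i)
          = perm_of (id, \<lambda>_. 0, r (mg_tgt G e)) (perm_of (D e) i)"
      and "slopes_of (id, \<lambda>_. 0, r (mg_src G e)) i e
            + slopes_of (E_of L e) (perm_of (id, \<lambda>_. 0, r (mg_src G e)) i)
          = slopes_of (D e) i - slopes_of (id, \<lambda>_. 0, r (mg_tgt G e)) (perm_of (D e) i) e"
      and "offset_of (id, \<lambda>_. 0, r (mg_src G e)) i
            + offset_of (E_of L e) (perm_of (id, \<lambda>_. 0, r (mg_src G e)) i)
          = offset_of (D e) i + offset_of (id, \<lambda>_. 0, r (mg_tgt G e)) (perm_of (D e) i)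
            + real_of_int (slopes_of (id, \<lambda>_. 0, r (mg_tgt G e)) (perm_of (D e) i) e)
              * mg_len G e"
      using simple_modelD(5)[OF G e] unfolding E_of_def L_def r_def by simp_all
  qed
  then have "bundle_iso G n D (E_of L)"
    using bundle_iso_iff_witness[OF G] D vbundle_E_of[OF L] by blast
  with L show ?thesis by (intro exI[of _ L]) simp
qed

lemma iso_E_of_if_semistable:
  assumes G: "compact_connected_metric_graph G"
    and ss: "semistable G n D" and d0: "degree G n D = 0"
  shows "\<exists>L. local_system G n L \<and> bundle_iso G n D (E_of L)"
proof -
  have "simple_model G" using G unfolding compact_connected_metric_graph_def by blast
  moreover have "vbundle G n D" using ss unfolding semistable_def by blast
  ultimately show ?thesis
    using iso_E_of_if_flow exists_flow_if_semistable[OF G ss d0] by blast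
qed

section \<open>Isomorphisms between bundles of local systems\<close>

lemma sum_sheets_into_vertex:
  assumes perms: "\<forall>e\<in>mg_edges G. \<sigma> e permutes {..<n}" and "j < n"
  shows "(\<Sum>p\<in>{(e, i). e \<in> mg_edges G \<and> i < n \<and> mg_tgt G e = v \<and> \<sigma> e i = j}. g (fst p) (snd p))
       = (\<Sum>e\<in>in_edges G v. g e (inv (\<sigma> e) j))"
proof (rule sum.reindex_bij_witness[of _ "\<lambda>e. (e, inv (\<sigma> e) j)" fst])
  fix p assume "p \<in> {(e, i). e \<in> mg_edges G \<and> i < n \<and> mg_tgt G e = v \<and> \<sigma> e i = j}"
  then obtain e i where p: "p = (e, i)" "e \<in> mg_edges G" "i < n" "mg_tgt G e = v" "\<sigma> e i = j"
    by blast
  then have "inv (\<sigma> e) j = i" using perms permutes_inverses(2) by metis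
  then show "(fst p, inv (\<sigma> (fst p)) j) = p" "fst p \<in> in_edges G v"
    "g (fst p) (inv (\<sigma> (fst p)) j) = g (fst p) (snd p)"
    using p by simp_all
next
  fix e assume e: "e \<in> in_edges G v"
  then have \<sigma>: "\<sigma> e permutes {..<n}" using perms by blast
  show "fst (e, inv (\<sigma> e) j) = e" by simp
  show "(e, inv (\<sigma> e) j) \<in> {(e, i). e \<in> mg_edges G \<and> i < n \<and> mg_tgt G e = v \<and> \<sigma> e i = j}"
    using e permutes_less(2)[OF \<sigma> \<open>j < n\<close>] permutes_inverses(1)[OF \<sigma>] by simp
qed

lemma same_jac_class_iff_cover_div:
  assumes L1: "local_system G n L1"
  shows "same_jac_class G n L1 L2 \<pi> \<longleftrightarrow> (\<exists>a \<omega>.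
     (\<forall>v\<in>mg_verts G. \<forall>j<n. cover_div G (\<lambda>e. perm_of (L1 e)) \<omega> v j = 0) \<and>
     (\<forall>e\<in>mg_edges G. \<forall>i<n.
        snd (L1 e) i - snd (L2 e) (\<pi> (mg_src G e) i)
        = a (mg_tgt G e) (perm_of (L1 e) i) - a (mg_src G e) i + mg_len G e * real_of_int (\<omega> e i)))"
proof -
  have perms: "\<forall>e\<in>mg_edges G. perm_of (L1 e) permutes {..<n}"
    using L1 unfolding local_system_def .
  show ?thesis
    unfolding same_jac_class_def cover_div_def
    by (simp add: sum_sheets_into_vertex[OF perms] cong: conj_cong)
qed

lemma same_jac_class_if_iso_witness:
  assumes G: "simple_model G" and L1: "local_system G n L1"
    and \<phi>: "iso_witness G n (E_of L1) (E_of L2) \<phi>"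
  shows "cover_iso G n L1 L2 (\<lambda>v. perm_of (\<phi> v)) \<and> same_jac_class G n L1 L2 (\<lambda>v. perm_of (\<phi> v))"
proof -
  let ?\<sigma> = "\<lambda>e. perm_of (L1 e)"
  have perms: "\<forall>e\<in>mg_edges G. ?\<sigma> e permutes {..<n}" using L1 unfolding local_system_def .
  have star: "\<And>v. v \<in> mg_verts G \<Longrightarrow> star_sec G n v (\<phi> v)"
    using \<phi> unfolding iso_witness_def by blast
  have edge: "\<And>e i. e \<in> mg_edges G \<Longrightarrow> i < n \<Longrightarrow>
      perm_of (L2 e) (perm_of (\<phi> (mg_src G e)) i) = perm_of (\<phi> (mg_tgt G e)) (?\<sigma> e i) \<and>
      slopes_of (\<phi> (mg_src G e)) i e = - slopes_of (\<phi> (mg_tgt G e)) (?\<sigma> e i) e \<and>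
      offset_of (\<phi> (mg_src G e)) i + snd (L2 e) (perm_of (\<phi> (mg_src G e)) i)
        = snd (L1 e) i + offset_of (\<phi> (mg_tgt G e)) (?\<sigma> e i)
          + real_of_int (slopes_of (\<phi> (mg_tgt G e)) (?\<sigma> e i) e) * mg_len G e"
    using \<phi> unfolding iso_witness_def E_of_def by simp
  define \<omega> where "\<omega> e i = slopes_of (\<phi> (mg_src G e)) i e" for e i
  have "cover_iso G n L1 L2 (\<lambda>v. perm_of (\<phi> v))"
    unfolding cover_iso_def using star edge unfolding star_sec_def by simp
  moreover have "cover_div G ?\<sigma> \<omega> v j = 0" if v: "v \<in> mg_verts G" and "j < n" for v j
  proof -
    have "(\<Sum>e\<in>star_edges G v. slopes_of (\<phi> v) j e) = cover_div G ?\<sigma> \<omega> v j + (\<Sum>e\<in>in_edges G v. 0)"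
    proof (rule sum_star_edges_cover_div[OF G])
      fix e assume e: "e \<in> in_edges G v"
      then have \<sigma>: "?\<sigma> e permutes {..<n}" using perms by blast
      show "slopes_of (\<phi> v) j e = 0 - \<omega> e (inv (?\<sigma> e) j)"
        using edge[of e "inv (?\<sigma> e) j"] e permutes_less(2)[OF \<sigma> \<open>j < n\<close>] permutes_inverses(1)[OF \<sigma>]
        unfolding \<omega>_def by simp
    qed (simp add: \<omega>_def)
    then show ?thesis using star[OF v] \<open>j < n\<close> unfolding star_sec_def by simp
  qed
  moreover have "snd (L1 e) i - snd (L2 e) (perm_of (\<phi> (mg_src G e)) i)
      = - offset_of (\<phi> (mg_tgt G e)) (?\<sigma> e i) + offset_of (\<phi> (mg_src G e)) i
        + mg_len G e * real_of_int (\<omega> e i)" if "e \<in> mg_edges G" "i < n" for e i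
    using edge[OF that] unfolding \<omega>_def by (simp add: algebra_simps)
  ultimately show ?thesis
    unfolding same_jac_class_iff_cover_div[OF L1]
    by (intro conjI exI[of _ "\<lambda>v j. - offset_of (\<phi> v) j"] exI[of _ \<omega>]) auto
qed

lemma iso_witness_if_same_jac_class:
  assumes G: "simple_model G" and L1: "local_system G n L1"
    and \<pi>: "cover_iso G n L1 L2 \<pi>"
    and div: "\<forall>v\<in>mg_verts G. \<forall>j<n. cover_div G (\<lambda>e. perm_of (L1 e)) \<omega> v j = 0"
    and jac: "\<forall>e\<in>mg_edges G. \<forall>i<n. snd (L1 e) i - snd (L2 e) (\<pi> (mg_src G e) i)
        = a (mg_tgt G e) (perm_of (L1 e) i) - a (mg_src G e) i + mg_len G e * real_of_int (\<omega> e i)"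
  shows "iso_witness G n (E_of L1) (E_of L2)
     (\<lambda>v. (\<pi> v, \<lambda>j. - a v j,
           \<lambda>j e. if mg_src G e = v then \<omega> e j else - \<omega> e (inv (perm_of (L1 e)) j)))"
  (is "iso_witness G n _ _ ?\<phi>")
  unfolding iso_witness_def
proof (intro conjI ballI allI impI)
  let ?\<sigma> = "\<lambda>e. perm_of (L1 e)"
  fix v assume v: "v \<in> mg_verts G"
  show "star_sec G n v (?\<phi> v)"
    unfolding star_sec_def
  proof (intro conjI allI impI)
    show "perm_of (?\<phi> v) permutes {..<n}" using \<pi> v unfolding cover_iso_def by simp
    fix j assume "j < n"
    have "(\<Sum>e\<in>star_edges G v. slopes_of (?\<phi> v) j e) = cover_div G ?\<sigma> \<omega> v j + (\<Sum>e\<in>in_edges G v. 0)"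
      by (rule sum_star_edges_cover_div[OF G]) (use simple_modelD(5)[OF G] in auto)
    then show "(\<Sum>e\<in>star_edges G v. slopes_of (?\<phi> v) j e) = 0"
      using div v \<open>j < n\<close> by simp
  qed
next
  let ?\<sigma> = "\<lambda>e. perm_of (L1 e)"
  fix e i assume e: "e \<in> mg_edges G" and i: "i < n"
  then have "?\<sigma> e permutes {..<n}" using L1 unfolding local_system_def by blast
  then have inv: "inv (?\<sigma> e) (?\<sigma> e i) = i" by (rule permutes_inverses(2))
  note ne = simple_modelD(5)[OF G e]
  show "perm_of (E_of L2 e) (perm_of (?\<phi> (mg_src G e)) i)
      = perm_of (?\<phi> (mg_tgt G e)) (perm_of (E_of L1 e) i)"
    using \<pi> e i unfolding cover_iso_def by simp
  show "slopes_of (?\<phi> (mg_src G e)) i e + slopes_of (E_of L2 e) (perm_of (?\<phi> (mg_src G e)) i)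
      = slopes_of (E_of L1 e) i - slopes_of (?\<phi> (mg_tgt G e)) (perm_of (E_of L1 e) i) e"
    using ne inv unfolding E_of_def by simp
  show "offset_of (?\<phi> (mg_src G e)) i + offset_of (E_of L2 e) (perm_of (?\<phi> (mg_src G e)) i)
      = offset_of (E_of L1 e) i + offset_of (?\<phi> (mg_tgt G e)) (perm_of (E_of L1 e) i)
        + real_of_int (slopes_of (?\<phi> (mg_tgt G e)) (perm_of (E_of L1 e) i) e) * mg_len G e"
    using ne inv jac e i unfolding E_of_def by (simp add: algebra_simps)
qed

lemma bundle_iso_E_of_iff:
  assumes G: "simple_model G" and L1: "local_system G n L1" and L2: "local_system G n L2"
  shows "bundle_iso G n (E_of L1) (E_of L2)
    \<longleftrightarrow> (\<exists>\<pi>. cover_iso G n L1 L2 \<pi> \<and> same_jac_class G n L1 L2 \<pi>)"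
proof
  assume "bundle_iso G n (E_of L1) (E_of L2)"
  then obtain \<phi> where "iso_witness G n (E_of L1) (E_of L2) \<phi>"
    using bundle_iso_iff_witness[OF G] by blast
  then show "\<exists>\<pi>. cover_iso G n L1 L2 \<pi> \<and> same_jac_class G n L1 L2 \<pi>"
    using same_jac_class_if_iso_witness[OF G L1] by blast
next
  assume "\<exists>\<pi>. cover_iso G n L1 L2 \<pi> \<and> same_jac_class G n L1 L2 \<pi>"
  then obtain \<pi> a \<omega> where "cover_iso G n L1 L2 \<pi>"
    and "\<forall>v\<in>mg_verts G. \<forall>j<n. cover_div G (\<lambda>e. perm_of (L1 e)) \<omega> v j = 0"
    and "\<forall>e\<in>mg_edges G. \<forall>i<n. snd (L1 e) i - snd (L2 e) (\<pi> (mg_src G e) i)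
        = a (mg_tgt G e) (perm_of (L1 e) i) - a (mg_src G e) i + mg_len G e * real_of_int (\<omega> e i)"
    unfolding same_jac_class_iff_cover_div[OF L1] by blast
  from iso_witness_if_same_jac_class[OF G L1 this] show "bundle_iso G n (E_of L1) (E_of L2)"
    using bundle_iso_iff_witness[OF G] vbundle_E_of[OF L1] vbundle_E_of[OF L2] by blast
qed

theorem theorem5p4:
  fixes G :: "('v, 'e) mgraph" and n :: nat
  assumes "compact_connected_metric_graph G" and "1 \<le> n"
  shows "(\<forall>D. vbundle G n D \<longrightarrow>
            ((\<exists>L. local_system G n L \<and> bundle_iso G n D (E_of L))
             \<longleftrightarrow> semistable G n D \<and> degree G n D = 0))
       \<and> (\<forall>L. local_system G n L \<longrightarrow>
            (stable G n (E_of L) \<longleftrightarrow> indecomposable G n L))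
       \<and> (\<forall>L1 L2. local_system G n L1 \<longrightarrow> local_system G n L2 \<longrightarrow>
            (bundle_iso G n (E_of L1) (E_of L2)
             \<longleftrightarrow> (\<exists>\<pi>. cover_iso G n L1 L2 \<pi> \<and> same_jac_class G n L1 L2 \<pi>)))"
proof -
  \<comment> \<open>The argument works in every rank.\<close>
  note G = assms(1)
  have sm: "simple_model G" using G unfolding compact_connected_metric_graph_def by blast
  have "(\<exists>L. local_system G n L \<and> bundle_iso G n D (E_of L)) \<longleftrightarrow> semistable G n D \<and> degree G n D = 0"
    for D using semistable_if_iso_E_of[OF sm] iso_E_of_if_semistable[OF G] by blast
  moreover have "stable G n (E_of L) \<longleftrightarrow> indecomposable G n L" if "local_system G n L" for L
    using stable_E_of_if_indecomposable[OF G that] indecomposable_if_stable_E_of[OF G that] by blast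
  ultimately show ?thesis using bundle_iso_E_of_iff[OF sm] by blast
qed

end
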